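(* For $\xi\in\mathbb R$ let $g_\xi(x)=e^{2\pi i\xi x}$ on $[-1/2,1/2]$ and let $T_{g_\xi}$ be the Toeplitz operator with symbol $g_\xi$. Then: (1) if $\xi<-1/2$, $T_{g_\xi}$ is not injective; (2) if $-1/2<\xi<1/2$, $T_{g_\xi}$ is invertible; (3) if $\xi=-1/2+n$ for some $n\in\{0,1,2,\dots\}$, $T_{g_\xi}$ is injective but not bounded below; (4) if $\xi>1/2$ and $\xi\neq -1/2+n$ for all $n\in\{0,1,2,\dots\}$, $T_{g_\xi}$ is injective and bounded below but not surjective.
   Context: For $\phi\in L^1[-1/2,1/2]$, $\widehat\phi(n)=\int_{-1/2}^{1/2}\phi(x)e^{-2\pi i n x}\,dx$. Let $\tilde H^2=\{f\in L^2[-1/2,1/2]:\widehat f(n)=0 \text{ for all } n<0\}$ and $P_+$ the orthogonal projection of $L^2[-1/2,1/2]$ onto $\tilde H^2$. For $\phi\in L^\infty[-1/2,1/2]$ the Toeplitz operator $T_\phi:\tilde H^2\to\tilde H^2$ is $T_\phi f=P_+(\phi f)$ (matrix entries $\widehat\phi(j-k)$, $j,k\ge0$, in the basis $\{e^{2\pi i n x}\}_{n\ge0}$). An operator $T$ is bounded below if there is $c>0$ with $\|Tf\|\ge c\|f\|$ for all $f$. *)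

theory Defs
  imports "HOL-Analysis.Analysis"
begin

definition fourier_coeff :: "(real \<Rightarrow> complex) \<Rightarrow> int \<Rightarrow> complex" where
  "fourier_coeff \<phi> n = integral {-1/2..1/2} (\<lambda>x. \<phi> x * exp (- (2 * pi * \<i> * of_int n * of_real x)))"

text \<open>The Hardy space is identified with l^2(N) via the basis e^{2 pi i n x}, n >= 0.\<close>
definition is_l2 :: "(nat \<Rightarrow> complex) \<Rightarrow> bool" where
  "is_l2 f \<longleftrightarrow> summable (\<lambda>n. (cmod (f n))\<^sup>2)"

definition l2_norm :: "(nat \<Rightarrow> complex) \<Rightarrow> real" where
  "l2_norm f = sqrt (\<Sum>n. (cmod (f n))\<^sup>2)"

definition toeplitz :: "(real \<Rightarrow> complex) \<Rightarrow> (nat \<Rightarrow> complex) \<Rightarrow> (nat \<Rightarrow> complex)" where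
  "toeplitz \<phi> f = (\<lambda>j. \<Sum>k. fourier_coeff \<phi> (int j - int k) * f k)"

definition toeplitz_injective :: "(real \<Rightarrow> complex) \<Rightarrow> bool" where
  "toeplitz_injective \<phi> \<longleftrightarrow> (\<forall>f. is_l2 f \<and> toeplitz \<phi> f = (\<lambda>_. 0) \<longrightarrow> f = (\<lambda>_. 0))"

definition toeplitz_bounded_below :: "(real \<Rightarrow> complex) \<Rightarrow> bool" where
  "toeplitz_bounded_below \<phi> \<longleftrightarrow>
     (\<exists>c>0. \<forall>f. is_l2 f \<longrightarrow> l2_norm (toeplitz \<phi> f) \<ge> c * l2_norm f)"

definition toeplitz_surjective :: "(real \<Rightarrow> complex) \<Rightarrow> bool" where
  "toeplitz_surjective \<phi> \<longleftrightarrow> (\<forall>g. is_l2 g \<longrightarrow> (\<exists>f. is_l2 f \<and> toeplitz \<phi> f = g))"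

definition toeplitz_invertible :: "(real \<Rightarrow> complex) \<Rightarrow> bool" where
  "toeplitz_invertible \<phi> \<longleftrightarrow>
     (\<exists>S. (\<forall>g. is_l2 g \<longrightarrow> is_l2 (S g) \<and> toeplitz \<phi> (S g) = g)
        \<and> (\<forall>f. is_l2 f \<longrightarrow> S (toeplitz \<phi> f) = f)
        \<and> (\<exists>C. \<forall>g. is_l2 g \<longrightarrow> l2_norm (S g) \<le> C * l2_norm g))"

definition g_sym :: "real \<Rightarrow> real \<Rightarrow> complex" where
  "g_sym \<xi> x = exp (2 * pi * \<i> * of_real \<xi> * of_real x)"

end

(*
  Write g_t for the symbol g_sym t and T_t for its Toeplitz operator.  For |eta| < 1/2 and
  kappa = cos (pi eta) the symbol 1 - kappa g_eta has sup norm |sin (pi eta)| < 1 on the torus,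
  so T_eta = (I - T_(1 - kappa g_eta)) / kappa is bounded below and, by a Neumann series, onto.
  Since g_n is analytic for n >= 0, T_(eta + n) is T_eta after the n-fold unilateral shift, and
  T_(eta - n) is T_eta followed by deleting the first n coordinates.  This settles all
  frequencies outside 1/2 + Z: for xi > 1/2 the range misses T_eta e_0, and for xi < -1/2 the
  preimage of e_0 under T_eta lies in the kernel.

  At -1/2 - p the Taylor coefficients of sqrt (1 + z) lie in the kernel: F = sqrt (1 + g_1)
  satisfies g_(-1/2) F = conj F on the torus, so g_(-1/2-p) F has only negative frequencies.

  T_(-1/2) is injective because Re <T_(-1/2) u, u> is the integral of cos (pi x) |u (x)|^2, which
  controls every coefficient of u although the weight vanishes at the ends of the period.  It is
  not bounded below: kernel vectors of T_(-1/2-e) are approximate kernel vectors of T_(-1/2), and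
  as their coefficients are small, dropping the first n of them gives approximate kernel vectors
  of T_(-1/2+n).
*)
theory Submission
  imports Defs "HOL-Computational_Algebra.Formal_Power_Series"
begin

section \<open>Square-summable sequences\<close>

lemma l2_norm_nonneg: "is_l2 f \<Longrightarrow> 0 \<le> l2_norm f"
  unfolding is_l2_def l2_norm_def by (simp add: suminf_nonneg)

lemma L2_set_le_l2_norm:
  assumes "is_l2 f"
  shows "L2_set (\<lambda>k. cmod (f k)) A \<le> l2_norm f"
proof (cases "finite A")
  case True
  then have "(\<Sum>k\<in>A. (cmod (f k))\<^sup>2) \<le> (\<Sum>k. (cmod (f k))\<^sup>2)"
    using assms unfolding is_l2_def by (intro sum_le_suminf) auto
  then show ?thesis unfolding L2_set_def l2_norm_def by (rule real_sqrt_le_mono)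
qed (simp add: l2_norm_nonneg assms)

lemma norm_le_l2_norm: "is_l2 f \<Longrightarrow> cmod (f k) \<le> l2_norm f"
  using L2_set_le_l2_norm[of f "{k}"] by simp

lemma l2_if_L2_set_bounded:
  assumes bound: "\<And>n. L2_set (\<lambda>k. cmod (f k)) {..<n} \<le> B"
  shows "is_l2 f" and "l2_norm f \<le> B"
proof -
  have "0 \<le> B" using bound[of 0] by simp
  have sums: "(\<Sum>k<n. (cmod (f k))\<^sup>2) \<le> B\<^sup>2" for n
    using bound[of n] unfolding L2_set_def by (rule sqrt_le_D)
  show l2: "is_l2 f" unfolding is_l2_def by (rule summableI_nonneg_bounded[OF _ sums]) auto
  have "(\<Sum>k. (cmod (f k))\<^sup>2) \<le> B\<^sup>2"
    using l2 unfolding is_l2_def by (rule suminf_le_const[OF _ sums])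
  then show "l2_norm f \<le> B"
    unfolding l2_norm_def by (rule real_le_lsqrt[OF \<open>0 \<le> B\<close>])
qed

lemma l2_zero [simp]: "is_l2 (\<lambda>_. 0)" "l2_norm (\<lambda>_. 0) = 0"
  by (auto simp: is_l2_def l2_norm_def)

lemma l2_norm_eq_0_iff:
  assumes "is_l2 f"
  shows "l2_norm f = 0 \<longleftrightarrow> f = (\<lambda>_. 0)"
proof
  assume "l2_norm f = 0"
  then have "(\<Sum>k. (cmod (f k))\<^sup>2) = 0"
    using assms unfolding l2_norm_def is_l2_def by (simp add: suminf_nonneg)
  then have "\<forall>k. (cmod (f k))\<^sup>2 = 0"
    using assms unfolding is_l2_def by (subst (asm) suminf_eq_zero_iff) auto
  then show "f = (\<lambda>_. 0)" by auto
qed simp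

lemma l2_scale:
  assumes "is_l2 f"
  shows "is_l2 (\<lambda>k. c * f k)" and "l2_norm (\<lambda>k. c * f k) = cmod c * l2_norm f"
proof -
  have eq: "(\<lambda>k. (cmod (c * f k))\<^sup>2) = (\<lambda>k. (cmod c)\<^sup>2 * (cmod (f k))\<^sup>2)"
    by (simp add: norm_mult power_mult_distrib)
  show "is_l2 (\<lambda>k. c * f k)" using assms unfolding is_l2_def eq by (rule summable_mult)
  show "l2_norm (\<lambda>k. c * f k) = cmod c * l2_norm f"
    using assms unfolding l2_norm_def is_l2_def eq suminf_mult[OF assms[unfolded is_l2_def]]
    by (simp add: real_sqrt_mult)
qed

lemma l2_add:
  assumes f: "is_l2 f" and g: "is_l2 g"
  shows "is_l2 (\<lambda>k. f k + g k)" and "l2_norm (\<lambda>k. f k + g k) \<le> l2_norm f + l2_norm g"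
proof -
  have "L2_set (\<lambda>k. cmod (f k + g k)) {..<n} \<le> l2_norm f + l2_norm g" for n
  proof -
    have "L2_set (\<lambda>k. cmod (f k + g k)) {..<n} \<le> L2_set (\<lambda>k. cmod (f k) + cmod (g k)) {..<n}"
      by (intro L2_set_mono norm_triangle_ineq) auto
    also have "\<dots> \<le> L2_set (\<lambda>k. cmod (f k)) {..<n} + L2_set (\<lambda>k. cmod (g k)) {..<n}"
      by (rule L2_set_triangle_ineq)
    also have "\<dots> \<le> l2_norm f + l2_norm g"
      by (intro add_mono L2_set_le_l2_norm f g)
    finally show ?thesis .
  qed
  then show "is_l2 (\<lambda>k. f k + g k)" "l2_norm (\<lambda>k. f k + g k) \<le> l2_norm f + l2_norm g"
    by (rule l2_if_L2_set_bounded)+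
qed

lemma l2_diff:
  assumes f: "is_l2 f" and g: "is_l2 g"
  shows "is_l2 (\<lambda>k. f k - g k)" and "l2_norm (\<lambda>k. f k - g k) \<le> l2_norm f + l2_norm g"
  using l2_add[OF f l2_scale(1)[OF g, of "-1"]] l2_scale(2)[OF g, of "-1"] by simp_all

lemma l2_sum:
  assumes "finite I" "\<And>i. i \<in> I \<Longrightarrow> is_l2 (f i)"
  shows "is_l2 (\<lambda>k. \<Sum>i\<in>I. f i k) \<and> l2_norm (\<lambda>k. \<Sum>i\<in>I. f i k) \<le> (\<Sum>i\<in>I. l2_norm (f i))"
  using assms
proof (induction I rule: finite_induct)
  case (insert i I)
  then have "is_l2 (f i)" "is_l2 (\<lambda>k. \<Sum>i\<in>I. f i k)"
    and IH: "l2_norm (\<lambda>k. \<Sum>i\<in>I. f i k) \<le> (\<Sum>i\<in>I. l2_norm (f i))" by auto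
  from l2_add[OF this(1,2)] IH insert(1,2) show ?case by simp
qed simp

lemma l2_Cauchy_Schwarz:
  assumes a: "is_l2 a" and b: "is_l2 b"
  shows "summable (\<lambda>k. a k * b k)" and "cmod (\<Sum>k. a k * b k) \<le> l2_norm a * l2_norm b"
proof -
  have partial: "(\<Sum>k<n. cmod (a k * b k)) \<le> l2_norm a * l2_norm b" for n
  proof -
    have "(\<Sum>k<n. cmod (a k * b k)) = (\<Sum>k<n. \<bar>cmod (a k)\<bar> * \<bar>cmod (b k)\<bar>)"
      by (simp add: norm_mult)
    also have "\<dots> \<le> L2_set (\<lambda>k. cmod (a k)) {..<n} * L2_set (\<lambda>k. cmod (b k)) {..<n}"
      by (rule L2_set_mult_ineq)
    also have "\<dots> \<le> l2_norm a * l2_norm b"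
      by (intro mult_mono L2_set_le_l2_norm a b l2_norm_nonneg) auto
    finally show ?thesis .
  qed
  have abs: "summable (\<lambda>k. cmod (a k * b k))"
    by (rule summableI_nonneg_bounded[OF _ partial]) auto
  then show "summable (\<lambda>k. a k * b k)" by (rule summable_norm_cancel)
  have "cmod (\<Sum>k. a k * b k) \<le> (\<Sum>k. cmod (a k * b k))" by (rule summable_norm[OF abs])
  also have "\<dots> \<le> l2_norm a * l2_norm b" by (rule suminf_le_const[OF abs partial])
  finally show "cmod (\<Sum>k. a k * b k) \<le> l2_norm a * l2_norm b" .
qed

lemma l2_pointwise_limit:
  assumes lim: "\<And>j. (\<lambda>m. X m j) \<longlonglongrightarrow> x j"
    and bound: "\<And>m. m \<ge> m0 \<Longrightarrow> is_l2 (X m) \<and> l2_norm (X m) \<le> B"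
  shows "is_l2 x" and "l2_norm x \<le> B"
proof -
  have "L2_set (\<lambda>j. cmod (x j)) {..<n} \<le> B" for n
  proof (rule LIMSEQ_le_const2)
    show "(\<lambda>m. L2_set (\<lambda>j. cmod (X m j)) {..<n}) \<longlonglongrightarrow> L2_set (\<lambda>j. cmod (x j)) {..<n}"
      unfolding L2_set_def by (intro tendsto_intros lim)
    show "\<exists>N. \<forall>m\<ge>N. L2_set (\<lambda>j. cmod (X m j)) {..<n} \<le> B"
      using bound L2_set_le_l2_norm order_trans by blast
  qed
  then show "is_l2 x" "l2_norm x \<le> B" by (rule l2_if_L2_set_bounded)+
qed

lemma l2_if_summable_norm:
  assumes "summable (\<lambda>k. cmod (f k))"
  shows "is_l2 f"
proof -
  have "(\<lambda>k. cmod (f k)) \<longlonglongrightarrow> 0" using assms by (rule summable_LIMSEQ_zero)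
  then have "eventually (\<lambda>k. cmod (f k) < 1) sequentially" by (rule order_tendstoD) simp
  then have "eventually (\<lambda>k. norm ((cmod (f k))\<^sup>2) \<le> cmod (f k)) sequentially"
    by eventually_elim (simp add: power2_eq_square mult_left_le_one_le)
  then show ?thesis unfolding is_l2_def using assms by (rule summable_comparison_test_ev)
qed

lemma l2_unit_seq: "is_l2 (\<lambda>k. if k = 0 then 1 else 0)"
  unfolding is_l2_def by (rule summable_finite[of "{0}"]) auto

definition trunc_seq :: "nat \<Rightarrow> (nat \<Rightarrow> complex) \<Rightarrow> nat \<Rightarrow> complex" where
  "trunc_seq N f k = (if k < N then f k else 0)"

lemma l2_trunc_seq:
  "is_l2 (trunc_seq N f)" "l2_norm (trunc_seq N f) = L2_set (\<lambda>k. cmod (f k)) {..<N}"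
proof -
  have "(\<Sum>k. (cmod (trunc_seq N f k))\<^sup>2) = (\<Sum>k<N. (cmod (f k))\<^sup>2)"
    unfolding trunc_seq_def by (subst suminf_finite[of "{..<N}"]) auto
  then show "l2_norm (trunc_seq N f) = L2_set (\<lambda>k. cmod (f k)) {..<N}"
    unfolding l2_norm_def L2_set_def by simp
  show "is_l2 (trunc_seq N f)"
    unfolding is_l2_def trunc_seq_def by (rule summable_finite[of "{..<N}"]) auto
qed

lemma l2_norm_tail_tendsto_0:
  assumes f: "is_l2 f"
  shows "(\<lambda>N. l2_norm (\<lambda>k. f k - trunc_seq N f k)) \<longlonglongrightarrow> 0"
proof -
  have s: "summable (\<lambda>k. (cmod (f k))\<^sup>2)" using f unfolding is_l2_def .
  define g where "g N k = (cmod (f k - trunc_seq N f k))\<^sup>2" for N k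
  have g_shift: "(\<lambda>k. g N (k + N)) = (\<lambda>k. (cmod (f (k + N)))\<^sup>2)" for N
    by (simp add: g_def trunc_seq_def)
  have "summable (g N)" for N
    using summable_iff_shift[of "g N" N] g_shift[of N] summable_ignore_initial_segment[OF s, of N]
    by simp
  moreover have "(\<Sum>k<N. g N k) = 0" for N by (simp add: g_def trunc_seq_def)
  ultimately have "l2_norm (\<lambda>k. f k - trunc_seq N f k) = sqrt (\<Sum>k. (cmod (f (k + N)))\<^sup>2)" for N
    unfolding l2_norm_def g_def[symmetric] using suminf_split_initial_segment[of "g N" N] g_shift
    by simp
  moreover have "(\<lambda>N. sqrt (\<Sum>k. (cmod (f (k + N)))\<^sup>2)) \<longlonglongrightarrow> sqrt 0"
    by (intro tendsto_intros suminf_exist_split2 s)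
  ultimately show ?thesis by simp
qed

definition shift_seq :: "nat \<Rightarrow> (nat \<Rightarrow> complex) \<Rightarrow> nat \<Rightarrow> complex" where
  "shift_seq n w k = (if k < n then 0 else w (k - n))"

lemma l2_shift_seq:
  assumes w: "is_l2 w"
  shows "is_l2 (shift_seq n w)" and "l2_norm (shift_seq n w) = l2_norm w"
proof -
  have shifted: "(\<lambda>k. (cmod (shift_seq n w (k + n)))\<^sup>2) = (\<lambda>k. (cmod (w k))\<^sup>2)"
    by (simp add: shift_seq_def)
  have s: "summable (\<lambda>k. (cmod (shift_seq n w k))\<^sup>2)"
    using w unfolding is_l2_def by (subst summable_iff_shift[symmetric, of _ n]) (simp add: shifted)
  then show "is_l2 (shift_seq n w)" unfolding is_l2_def .
  have "(\<Sum>k. (cmod (shift_seq n w k))\<^sup>2) = (\<Sum>k. (cmod (shift_seq n w (k + n)))\<^sup>2)"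
    using suminf_split_initial_segment[OF s, of n] by (simp add: shift_seq_def)
  then show "l2_norm (shift_seq n w) = l2_norm w" unfolding l2_norm_def shifted by simp
qed

lemma shift_seq_eq_0_iff: "shift_seq n w = (\<lambda>_. 0) \<longleftrightarrow> w = (\<lambda>_. 0)"
  unfolding shift_seq_def fun_eq_iff by (metis add_diff_cancel_right' not_add_less2)

lemma l2_geometric_series:
  assumes d: "\<And>i. is_l2 (d i)" and bound: "\<And>i. l2_norm (d i) \<le> q ^ i * C"
    and q: "0 \<le> q" "q < 1"
  shows "(\<lambda>n. \<Sum>i<n. d i j) \<longlonglongrightarrow> (\<Sum>i. d i j)"
    and "is_l2 (\<lambda>j. (\<Sum>i. d i j) - (\<Sum>i<n. d i j))"
    and "l2_norm (\<lambda>j. (\<Sum>i. d i j) - (\<Sum>i<n. d i j)) \<le> q ^ n * C / (1 - q)"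
proof -
  have "summable (\<lambda>i. q ^ i * C)" using q by (intro summable_mult2 summable_geometric) auto
  then have "summable (\<lambda>i. d i j)" for j
    by (rule summable_comparison_test'[where N=0]) (use bound norm_le_l2_norm[OF d] order_trans in blast)
  then show lim: "(\<lambda>n. \<Sum>i<n. d i j) \<longlonglongrightarrow> (\<Sum>i. d i j)" for j by (rule summable_LIMSEQ)
  have geometric: "(\<Sum>i\<in>{n..<m}. q ^ i) \<le> q ^ n / (1 - q)" for m
  proof (cases "n < m")
    case True
    then obtain k where "m = Suc k" "n \<le> k" by (cases m) auto
    then have "(1 - q) * (\<Sum>i\<in>{n..<m}. q ^ i) = q ^ n - q ^ m"
      using sum_gp_multiplied[of n k q] by (simp add: atLeastLessThanSuc_atLeastAtMost)
    then have "(1 - q) * (\<Sum>i\<in>{n..<m}. q ^ i) \<le> q ^ n" using zero_le_power[OF q(1), of m] by linarith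
    then show ?thesis using q by (simp add: field_simps)
  qed (use q in simp)
  have partial: "is_l2 (\<lambda>j. (\<Sum>i<m. d i j) - (\<Sum>i<n. d i j))
      \<and> l2_norm (\<lambda>j. (\<Sum>i<m. d i j) - (\<Sum>i<n. d i j)) \<le> q ^ n * C / (1 - q)" if "n \<le> m" for m
  proof -
    have "(\<lambda>j. (\<Sum>i<m. d i j) - (\<Sum>i<n. d i j)) = (\<lambda>j. \<Sum>i\<in>{n..<m}. d i j)"
      using that by (simp add: lessThan_atLeast0 sum_diff_nat_ivl)
    moreover have "(\<Sum>i\<in>{n..<m}. l2_norm (d i)) \<le> q ^ n * C / (1 - q)"
    proof -
      have "0 \<le> C" using bound[of 0] l2_norm_nonneg[OF d] by (metis order_trans power_0 mult_1)
      have "(\<Sum>i\<in>{n..<m}. l2_norm (d i)) \<le> (\<Sum>i\<in>{n..<m}. q ^ i) * C"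
        unfolding sum_distrib_right by (intro sum_mono bound)
      also have "\<dots> \<le> q ^ n / (1 - q) * C" by (intro mult_right_mono geometric \<open>0 \<le> C\<close>)
      finally show ?thesis by simp
    qed
    ultimately show ?thesis using l2_sum[of "{n..<m}" d] d by auto
  qed
  have "(\<lambda>m. (\<Sum>i<m. d i j) - (\<Sum>i<n. d i j)) \<longlonglongrightarrow> (\<Sum>i. d i j) - (\<Sum>i<n. d i j)" for j
    by (intro tendsto_intros lim)
  from l2_pointwise_limit[of _ _ n, OF this partial]
  show "is_l2 (\<lambda>j. (\<Sum>i. d i j) - (\<Sum>i<n. d i j))"
    and "l2_norm (\<lambda>j. (\<Sum>i. d i j) - (\<Sum>i<n. d i j)) \<le> q ^ n * C / (1 - q)" by auto
qed

lemma l2_coordinate_tendsto: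
  assumes l2: "\<And>n. is_l2 (\<lambda>j. x j - X n j)" and le: "\<And>n. l2_norm (\<lambda>j. x j - X n j) \<le> b n"
    and b: "b \<longlonglongrightarrow> 0"
  shows "(\<lambda>n. X n j) \<longlonglongrightarrow> x j"
proof -
  have bound: "cmod (X n j - x j) \<le> b n" for n
    using norm_le_l2_norm[OF l2[of n], of j] le[of n] by (simp add: norm_minus_commute)
  have "(\<lambda>n. X n j - x j) \<longlonglongrightarrow> 0"
    by (rule Lim_null_comparison[OF always_eventually b]) (intro allI bound)
  then show ?thesis by (rule LIM_zero_cancel)
qed

lemma l2_contraction_fixpoint:
  assumes l2: "\<And>u. is_l2 u \<Longrightarrow> is_l2 (A u)"
    and diff: "\<And>u v. is_l2 u \<Longrightarrow> is_l2 v \<Longrightarrow> A (\<lambda>j. u j - v j) = (\<lambda>j. A u j - A v j)"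
    and contr: "\<And>u. is_l2 u \<Longrightarrow> l2_norm (A u) \<le> q * l2_norm u"
    and q: "0 \<le> q" "q < 1" and g: "is_l2 g"
  obtains h where "is_l2 h" and "\<And>j. h j = A h j + g j"
proof -
  define h where "h n = ((\<lambda>u j. A u j + g j) ^^ n) (\<lambda>_. 0)" for n
  have h_0: "h 0 = (\<lambda>_. 0)" and h_Suc: "h (Suc n) = (\<lambda>j. A (h n) j + g j)" for n
    by (simp_all add: h_def)
  have h_l2: "is_l2 (h n)" for n
    by (induction n) (simp_all add: h_0 h_Suc l2_add l2 g)
  define d where "d n = (\<lambda>j. h (Suc n) j - h n j)" for n
  have d_l2: "is_l2 (d n)" for n unfolding d_def by (intro l2_diff h_l2)
  have "A (\<lambda>_. 0) = (\<lambda>_. 0)" using diff[OF l2_zero(1) l2_zero(1)] by simp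
  then have d_0: "d 0 = g" by (simp add: d_def h_0 h_Suc)
  have d_Suc: "d (Suc n) = A (d n)" for n
    using diff[OF h_l2 h_l2, of "Suc n" n] by (simp add: d_def h_Suc)
  have d_norm: "l2_norm (d n) \<le> q ^ n * l2_norm g" for n
  proof (induction n)
    case (Suc n)
    have "l2_norm (d (Suc n)) \<le> q * l2_norm (d n)" unfolding d_Suc by (rule contr[OF d_l2])
    also have "\<dots> \<le> q * (q ^ n * l2_norm g)" using Suc q(1) by (rule mult_left_mono)
    finally show ?case by simp
  qed (simp add: d_0)
  have h_sum: "h n j = (\<Sum>i<n. d i j)" for n j
    using sum_lessThan_telescope[of "\<lambda>i. h i j"] by (simp add: d_def h_0)
  \<comment> \<open>\<open>d n = A\<^sup>n g\<close>, so \<open>H\<close> is the Neumann series\<close>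
  define H where "H j = (\<Sum>i. d i j)" for j
  define C where "C = l2_norm g / (1 - q)"
  note series = l2_geometric_series[OF d_l2 d_norm q]
  have H_tail: "is_l2 (\<lambda>j. H j - h n j)" "l2_norm (\<lambda>j. H j - h n j) \<le> q ^ n * C" for n
    using series(2,3)[of n] by (simp_all add: H_def h_sum C_def)
  have H_l2: "is_l2 H" using H_tail(1)[of 0] by (simp add: h_0)
  have "H j = A H j + g j" for j
  proof (rule LIMSEQ_unique)
    show "(\<lambda>n. h (Suc n) j) \<longlonglongrightarrow> H j"
      using LIMSEQ_Suc[OF series(1)] by (simp add: H_def h_sum)
    have "(\<lambda>n. A (h n) j) \<longlonglongrightarrow> A H j"
    proof (rule l2_coordinate_tendsto)
      fix n
      have eq: "(\<lambda>j. A H j - A (h n) j) = A (\<lambda>j. H j - h n j)" by (simp add: diff[OF H_l2 h_l2])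
      show "is_l2 (\<lambda>j. A H j - A (h n) j)" unfolding eq by (rule l2[OF H_tail(1)])
      show "l2_norm (\<lambda>j. A H j - A (h n) j) \<le> q * (q ^ n * C)"
        unfolding eq using contr[OF H_tail(1)] H_tail(2) q(1) by (meson mult_left_mono order_trans)
    next
      have "(\<lambda>n. q ^ n) \<longlonglongrightarrow> 0" using q by (intro LIMSEQ_power_zero) auto
      then show "(\<lambda>n. q * (q ^ n * C)) \<longlonglongrightarrow> 0"
        by (rule tendsto_mult_right_zero[OF tendsto_mult_left_zero])
    qed
    then show "(\<lambda>n. h (Suc n) j) \<longlonglongrightarrow> A H j + g j"
      unfolding h_Suc by (intro tendsto_intros)
  qed
  with H_l2 show thesis by (rule that)
qed

section \<open>Exponentials and trigonometric polynomials on the torus\<close>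

definition torus :: "real set" where
  "torus = {-1/2..1/2}"

lemma mem_torus: "x \<in> torus \<longleftrightarrow> -1/2 \<le> x \<and> x \<le> 1/2"
  unfolding torus_def by auto

lemma integrable_on_torus: "continuous_on torus h \<Longrightarrow> h integrable_on torus"
  for h :: "real \<Rightarrow> 'a::banach"
  unfolding torus_def by (rule integrable_continuous_interval)

lemma integral_torus_const: "integral torus (\<lambda>x. c) = c"
  unfolding torus_def by simp

lemma bounded_on_torus:
  assumes "continuous_on torus \<phi>"
  obtains M where "\<forall>x\<in>torus. cmod (\<phi> x) \<le> M"
proof -
  have "compact (\<phi> ` torus)"
    using assms by (intro compact_continuous_image) (auto simp: torus_def)
  then show ?thesis using that by (auto dest!: compact_imp_bounded simp: bounded_iff)
qed

lemma torus_bound_nonneg: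
  assumes "\<forall>x\<in>torus. cmod (\<phi> x) \<le> M"
  shows "0 \<le> M"
proof -
  have "(0::real) \<in> torus" by (simp add: mem_torus)
  then show ?thesis using assms norm_ge_zero order_trans by blast
qed

lemma cos_pi_mult_pos:
  assumes "\<bar>\<eta>\<bar> < 1/2"
  shows "0 < cos (pi * \<eta>)"
proof -
  have "-1/2 < \<eta>" "\<eta> < 1/2" using assms by auto
  then have "pi * (-1/2) < pi * \<eta>" "pi * \<eta> < pi * (1/2)"
    using mult_strict_left_mono[OF _ pi_gt_zero] by blast+
  then show ?thesis by (intro cos_gt_zero_pi) auto
qed

lemma cos_pi_nonneg_on_torus:
  assumes "x \<in> torus"
  shows "0 \<le> cos (pi * x)"
proof -
  have "-(pi/2) \<le> pi * x" "pi * x \<le> pi/2"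
    using assms mult_left_mono[of "-1/2" x pi] mult_left_mono[of x "1/2" pi] by (auto simp: mem_torus)
  then show ?thesis by (rule cos_ge_zero)
qed

lemma g_sym_add: "g_sym a x * g_sym b x = g_sym (a + b) x"
  unfolding g_sym_def by (simp add: exp_add[symmetric] algebra_simps)

lemma cnj_g_sym: "cnj (g_sym t x) = g_sym (-t) x"
  unfolding g_sym_def exp_cnj by simp

lemma norm_g_sym [simp]: "cmod (g_sym t x) = 1"
  unfolding g_sym_def by (simp add: norm_exp_eq_Re)

lemma g_sym_0 [simp]: "g_sym 0 x = 1"
  unfolding g_sym_def by simp

lemma continuous_on_g_sym [continuous_intros]: "continuous_on S (g_sym t)"
  unfolding g_sym_def by (intro continuous_intros)

lemma g_sym_eq_cis: "g_sym t x = cis (2 * pi * t * x)"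
  unfolding g_sym_def cis_conv_exp by (simp add: algebra_simps)

lemma norm_cis_minus_one_le: "cmod (cis t - 1) \<le> \<bar>t\<bar>"
proof -
  have "(cmod (cis t - 1))\<^sup>2 = (cos t - 1)\<^sup>2 + (sin t)\<^sup>2" by (simp add: cmod_power2)
  also have "\<dots> = 2 - 2 * cos t" by (simp add: power2_eq_square algebra_simps)
  also have "\<dots> = 4 * (sin (t/2))\<^sup>2" using cos_double_sin[of "t/2"] by simp
  also have "\<dots> \<le> 4 * (t/2)\<^sup>2"
    using abs_sin_x_le_abs_x[of "t/2"] abs_le_square_iff by (metis mult_left_mono zero_le_numeral)
  finally have "(cmod (cis t - 1))\<^sup>2 \<le> \<bar>t\<bar>\<^sup>2" by (simp add: power2_eq_square)
  then show ?thesis by (rule power2_le_imp_le) simp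
qed

lemma norm_g_sym_diff_le:
  assumes "x \<in> torus"
  shows "cmod (g_sym a x - g_sym b x) \<le> pi * \<bar>a - b\<bar>"
proof -
  have "g_sym a x - g_sym b x = g_sym b x * (g_sym (a - b) x - 1)"
    by (simp add: right_diff_distrib g_sym_add)
  then have "cmod (g_sym a x - g_sym b x) = cmod (cis (2 * pi * (a - b) * x) - 1)"
    by (simp add: norm_mult g_sym_eq_cis)
  also have "\<dots> \<le> 2 * pi * \<bar>a - b\<bar> * \<bar>x\<bar>"
    using norm_cis_minus_one_le[of "2 * pi * (a - b) * x"] by (simp add: abs_mult)
  also have "\<dots> \<le> 2 * pi * \<bar>a - b\<bar> * (1/2)"
    using assms by (intro mult_left_mono) (auto simp: mem_torus)
  finally show ?thesis by simp
qed

lemma integral_g_sym_int: "integral torus (g_sym (of_int m)) = (if m = 0 then 1 else 0)"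
proof (cases "m = 0")
  case False
  define a where "a = complex_of_real (2 * pi * of_int m) * \<i>"
  have a0: "a \<noteq> 0" using False by (simp add: a_def)
  have "\<And>t. t \<in> {-1/2..1/2} \<Longrightarrow>
      ((\<lambda>x. exp (a * x) / a) has_vector_derivative exp (a * t)) (at t within {-1/2..1/2})"
    using a0 by (intro derivative_eq_intros has_complex_derivative_imp_has_vector_derivative[unfolded o_def]
        | simp)+
  then have "((\<lambda>t. exp (a * of_real t)) has_integral
      exp (a * of_real (1/2)) / a - exp (a * of_real (-1/2)) / a) torus"
    unfolding torus_def by (intro fundamental_theorem_of_calculus) auto
  moreover have "exp (a * of_real (1/2)) = exp (a * of_real (-1/2)) * exp a"
    by (simp add: exp_add[symmetric] algebra_simps)
  moreover have "exp a = 1"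
    unfolding a_def using exp_integer_2pi[of "of_int m"] by (simp add: algebra_simps)
  moreover have "(\<lambda>t. exp (a * of_real t)) = g_sym (of_int m)"
    by (auto simp: fun_eq_iff g_sym_def a_def algebra_simps)
  ultimately show ?thesis using False by (simp add: integral_unique)
next
  case True
  then have "g_sym (of_int m) = (\<lambda>_. 1)" by (simp add: fun_eq_iff)
  then show ?thesis using True by (simp add: integral_torus_const)
qed

definition inner_L2 :: "(real \<Rightarrow> complex) \<Rightarrow> (real \<Rightarrow> complex) \<Rightarrow> complex" where
  "inner_L2 u v = integral torus (\<lambda>x. u x * cnj (v x))"

lemma fourier_coeff_eq_inner: "fourier_coeff \<phi> n = inner_L2 \<phi> (g_sym (of_int n))"
  unfolding fourier_coeff_def inner_L2_def torus_def g_sym_def exp_cnj by (simp add: algebra_simps)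

lemma inner_L2_g_sym_int: "inner_L2 (g_sym (of_int n)) (g_sym (of_int m)) = (if n = m then 1 else 0)"
proof -
  have "(\<lambda>x. g_sym (of_int n) x * cnj (g_sym (of_int m) x)) = g_sym (of_int (n - m))"
    by (auto simp: fun_eq_iff cnj_g_sym g_sym_add)
  then show ?thesis unfolding inner_L2_def using integral_g_sym_int[of "n - m"] by simp
qed

lemma inner_L2_g_sym_nat: "inner_L2 (g_sym (real n)) (g_sym (real m)) = (if n = m then 1 else 0)"
  using inner_L2_g_sym_int[of "int n" "int m"] by simp

lemma inner_L2_commute: "inner_L2 u v = cnj (inner_L2 v u)"
  unfolding inner_L2_def integral_cnj by (simp add: mult.commute)

lemma inner_L2_sum_left:
  assumes "finite S" "\<And>i. i \<in> S \<Longrightarrow> continuous_on torus (u i)" "continuous_on torus v"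
  shows "inner_L2 (\<lambda>x. \<Sum>i\<in>S. a i * u i x) v = (\<Sum>i\<in>S. a i * inner_L2 (u i) v)"
proof -
  have "inner_L2 (\<lambda>x. \<Sum>i\<in>S. a i * u i x) v = integral torus (\<lambda>x. \<Sum>i\<in>S. a i * (u i x * cnj (v x)))"
    unfolding inner_L2_def by (simp only: sum_distrib_right mult.assoc)
  also have "\<dots> = (\<Sum>i\<in>S. a i * inner_L2 (u i) v)"
    unfolding inner_L2_def using assms
    by (subst integral_sum) (auto intro!: integrable_on_torus continuous_intros)
  finally show ?thesis .
qed

lemma inner_L2_sum_right:
  assumes "finite S" "\<And>i. i \<in> S \<Longrightarrow> continuous_on torus (u i)" "continuous_on torus v"
  shows "inner_L2 v (\<lambda>x. \<Sum>i\<in>S. a i * u i x) = (\<Sum>i\<in>S. cnj (a i) * inner_L2 v (u i))"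
  by (subst (1 2) inner_L2_commute) (simp add: inner_L2_sum_left[OF assms])

lemma inner_L2_diff_left:
  assumes "continuous_on torus u" "continuous_on torus v" "continuous_on torus w"
  shows "inner_L2 (\<lambda>x. u x - v x) w = inner_L2 u w - inner_L2 v w"
  unfolding inner_L2_def left_diff_distrib using assms
  by (intro integral_diff integrable_on_torus continuous_intros)

lemma inner_L2_self:
  assumes "continuous_on torus h"
  shows "inner_L2 h h = of_real (integral torus (\<lambda>x. (cmod (h x))\<^sup>2))"
proof -
  have "(\<lambda>x. (cmod (h x))\<^sup>2) integrable_on torus"
    using assms by (intro integrable_on_torus continuous_intros)
  then show ?thesis
    unfolding inner_L2_def complex_norm_square[symmetric]
    by (intro integral_unique has_integral_of_real integrable_integral)
qed

lemma bessel_inequality: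
  assumes h: "continuous_on torus h" and J: "finite J"
  shows "(\<Sum>n\<in>J. (cmod (inner_L2 h (g_sym (of_int n))))\<^sup>2) \<le> integral torus (\<lambda>x. (cmod (h x))\<^sup>2)"
proof -
  define a where "a n = inner_L2 h (g_sym (of_int n))" for n
  define P where "P x = (\<Sum>n\<in>J. a n * g_sym (of_int n) x)" for x
  define S where "S = (\<Sum>n\<in>J. (cmod (a n))\<^sup>2)"
  have cP: "continuous_on torus P" unfolding P_def by (intro continuous_intros)
  have cg: "\<And>n. continuous_on torus (g_sym (of_int n))" by (intro continuous_intros)
  have sq: "z * cnj z = of_real ((cmod z)\<^sup>2)" for z by (metis complex_norm_square)
  have hP: "inner_L2 h P = of_real S"
    unfolding P_def using J cg h
    by (simp add: inner_L2_sum_right S_def a_def[symmetric] mult.commute sq)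
  have PP: "inner_L2 P P = of_real S"
  proof -
    have "inner_L2 P P = (\<Sum>n\<in>J. a n * inner_L2 (g_sym (of_int n)) P)"
      unfolding P_def[abs_def] using J cg cP by (intro inner_L2_sum_left) (auto simp: P_def[abs_def])
    also have "\<dots> = (\<Sum>n\<in>J. a n * (\<Sum>m\<in>J. cnj (a m) * (if n = m then 1 else 0)))"
      unfolding P_def using J cg by (simp add: inner_L2_sum_right inner_L2_g_sym_int)
    also have "\<dots> = of_real S"
      using J by (simp add: S_def sq if_distrib sum.delta cong: if_cong)
    finally show ?thesis .
  qed
  have "inner_L2 (\<lambda>x. h x - P x) (\<lambda>x. h x - P x) = inner_L2 h h - of_real S"
  proof -
    have "inner_L2 (\<lambda>x. h x - P x) w = inner_L2 h w - inner_L2 P w" if "continuous_on torus w" for w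
      using h cP that by (rule inner_L2_diff_left)
    moreover have "inner_L2 w (\<lambda>x. h x - P x) = inner_L2 w h - inner_L2 w P" if "continuous_on torus w" for w
      using h cP that by (subst (1 2 3) inner_L2_commute) (simp add: inner_L2_diff_left)
    ultimately show ?thesis
      using h cP hP PP inner_L2_commute[of P h] by (simp add: continuous_intros)
  qed
  then have "integral torus (\<lambda>x. (cmod (h x - P x))\<^sup>2) = integral torus (\<lambda>x. (cmod (h x))\<^sup>2) - S"
    using h cP by (simp add: inner_L2_self continuous_on_diff flip: of_real_diff)
  moreover have "0 \<le> integral torus (\<lambda>x. (cmod (h x - P x))\<^sup>2)"
    using h cP by (intro integral_nonneg integrable_on_torus continuous_intros) auto
  ultimately show ?thesis by (simp add: S_def a_def)
qed

definition trig_poly :: "nat \<Rightarrow> (nat \<Rightarrow> complex) \<Rightarrow> real \<Rightarrow> complex" where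
  "trig_poly N f x = (\<Sum>k<N. f k * g_sym (real k) x)"

lemma continuous_on_trig_poly [continuous_intros]: "continuous_on S (trig_poly N f)"
  unfolding trig_poly_def by (intro continuous_intros)

lemma inner_L2_trig_poly_g_sym: "m < N \<Longrightarrow> inner_L2 (trig_poly N f) (g_sym (real m)) = f m"
  unfolding trig_poly_def[abs_def]
  by (subst inner_L2_sum_left) (auto intro!: continuous_intros simp: inner_L2_g_sym_nat if_distrib cong: if_cong)

lemma integral_norm_trig_poly_sq:
  "integral torus (\<lambda>x. (cmod (trig_poly N f x))\<^sup>2) = (\<Sum>k<N. (cmod (f k))\<^sup>2)"
proof -
  have "inner_L2 (trig_poly N f) (trig_poly N f) = (\<Sum>k<N. cnj (f k) * f k)"
    by (subst (2) trig_poly_def[abs_def], subst inner_L2_sum_right)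
      (auto intro!: continuous_intros simp: inner_L2_trig_poly_g_sym)
  also have "\<dots> = of_real (\<Sum>k<N. (cmod (f k))\<^sup>2)"
    by (simp only: of_real_sum complex_norm_square mult.commute)
  finally have "complex_of_real (integral torus (\<lambda>x. (cmod (trig_poly N f x))\<^sup>2))
      = of_real (\<Sum>k<N. (cmod (f k))\<^sup>2)"
    by (simp only: inner_L2_self[OF continuous_on_trig_poly])
  then show ?thesis by (simp only: of_real_eq_iff)
qed

lemma norm_le_integral_norm_trig_poly:
  assumes "m < N"
  shows "cmod (u m) \<le> integral torus (\<lambda>x. cmod (trig_poly N u x))"
proof -
  have "u m = integral torus (\<lambda>x. trig_poly N u x * cnj (g_sym (real m) x))"
    using inner_L2_trig_poly_g_sym[OF assms, of u] unfolding inner_L2_def by simp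
  also have "cmod \<dots> \<le> integral torus (\<lambda>x. cmod (trig_poly N u x))"
    by (rule integral_norm_bound_integral)
      (auto intro!: integrable_on_torus continuous_intros simp: norm_mult)
  finally show ?thesis .
qed

definition fourier_series :: "(nat \<Rightarrow> complex) \<Rightarrow> real \<Rightarrow> complex" where
  "fourier_series f x = (\<Sum>k. f k * g_sym (real k) x)"

lemma norm_trig_poly_le:
  assumes "summable (\<lambda>k. cmod (f k))"
  shows "cmod (trig_poly N f x) \<le> (\<Sum>k. cmod (f k))"
proof -
  have "cmod (trig_poly N f x) \<le> (\<Sum>k<N. cmod (f k * g_sym (real k) x))"
    unfolding trig_poly_def by (rule norm_sum)
  also have "\<dots> = (\<Sum>k<N. cmod (f k))" by (simp add: norm_mult)
  also have "\<dots> \<le> (\<Sum>k. cmod (f k))" using assms by (intro sum_le_suminf) auto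
  finally show ?thesis .
qed

lemma trig_poly_tendsto_fourier_series:
  assumes "summable (\<lambda>k. cmod (f k))"
  shows "(\<lambda>N. trig_poly N f x) \<longlonglongrightarrow> fourier_series f x"
proof -
  have "summable (\<lambda>k. f k * g_sym (real k) x)"
    by (rule summable_norm_cancel) (use assms in \<open>simp add: norm_mult\<close>)
  then show ?thesis unfolding trig_poly_def fourier_series_def by (rule summable_LIMSEQ)
qed

lemma integral_mult_trig_poly_tendsto:
  assumes f: "summable (\<lambda>k. cmod (f k))" and \<phi>: "continuous_on torus \<phi>"
  shows "(\<lambda>N. integral torus (\<lambda>x. \<phi> x * trig_poly N f x))
    \<longlonglongrightarrow> integral torus (\<lambda>x. \<phi> x * fourier_series f x)"
proof -
  obtain M where M: "\<forall>x\<in>torus. cmod (\<phi> x) \<le> M" using bounded_on_torus[OF \<phi>] .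
  show ?thesis
  proof (rule dominated_convergence(2))
    show "(\<lambda>x. \<phi> x * trig_poly N f x) integrable_on torus" for N
      using \<phi> by (intro integrable_on_torus continuous_intros)
    show "(\<lambda>x. M * (\<Sum>k. cmod (f k))) integrable_on torus"
      by (intro integrable_on_torus continuous_intros)
    show "norm (\<phi> x * trig_poly N f x) \<le> M * (\<Sum>k. cmod (f k))" if "x \<in> torus" for N x
      unfolding norm_mult using M that norm_trig_poly_le[OF f] torus_bound_nonneg[OF M]
      by (intro mult_mono) auto
    show "(\<lambda>N. \<phi> x * trig_poly N f x) \<longlonglongrightarrow> \<phi> x * fourier_series f x" for x
      by (intro tendsto_intros trig_poly_tendsto_fourier_series f)
  qed
qed

lemma fourier_coeff_fourier_series_neg:
  assumes f: "summable (\<lambda>k. cmod (f k))" and m: "m < 0"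
  shows "fourier_coeff (fourier_series f) m = 0"
proof (rule LIMSEQ_unique)
  have "fourier_coeff (fourier_series f) m
      = integral torus (\<lambda>x. cnj (g_sym (of_int m) x) * fourier_series f x)"
    unfolding fourier_coeff_eq_inner inner_L2_def by (simp add: ac_simps)
  then show "(\<lambda>N. integral torus (\<lambda>x. cnj (g_sym (of_int m) x) * trig_poly N f x))
      \<longlonglongrightarrow> fourier_coeff (fourier_series f) m"
    by (simp only:) (intro integral_mult_trig_poly_tendsto f continuous_intros)
  have "integral torus (\<lambda>x. cnj (g_sym (of_int m) x) * trig_poly N f x) = 0" for N
  proof -
    have "integral torus (\<lambda>x. cnj (g_sym (of_int m) x) * trig_poly N f x)
        = inner_L2 (\<lambda>x. \<Sum>k<N. f k * g_sym (of_int (int k)) x) (g_sym (of_int m))"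
      unfolding inner_L2_def trig_poly_def by (simp add: ac_simps)
    also have "\<dots> = (\<Sum>k<N. f k * inner_L2 (g_sym (of_int (int k))) (g_sym (of_int m)))"
      by (intro inner_L2_sum_left continuous_intros) auto
    also have "\<dots> = 0"
    proof (intro sum.neutral ballI)
      fix k
      have "inner_L2 (g_sym (of_int (int k))) (g_sym (of_int m)) = 0"
        using m by (simp only: inner_L2_g_sym_int) simp
      then show "f k * inner_L2 (g_sym (of_int (int k))) (g_sym (of_int m)) = 0" by simp
    qed
    finally show ?thesis .
  qed
  then show "(\<lambda>N. integral torus (\<lambda>x. cnj (g_sym (of_int m) x) * trig_poly N f x)) \<longlonglongrightarrow> 0"
    by simp
qed

section \<open>Toeplitz operators with continuous symbols\<close>

lemma inner_L2_mult_g_sym: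
  "inner_L2 (\<lambda>x. \<phi> x * g_sym (real k) x) (g_sym (real j)) = fourier_coeff \<phi> (int j - int k)"
proof -
  have "g_sym (real k) x * cnj (g_sym (real j) x) = cnj (g_sym (of_int (int j - int k)) x)" for x
    by (simp add: cnj_g_sym g_sym_add)
  then show ?thesis unfolding fourier_coeff_eq_inner inner_L2_def by (simp add: mult.assoc)
qed

lemma toeplitz_trunc_seq:
  "toeplitz \<phi> (trunc_seq N f) j = (\<Sum>k<N. fourier_coeff \<phi> (int j - int k) * f k)"
  unfolding toeplitz_def trunc_seq_def by (subst suminf_finite[of "{..<N}"]) auto

lemma toeplitz_trunc_seq_eq_inner:
  assumes "continuous_on torus \<phi>"
  shows "toeplitz \<phi> (trunc_seq N f) j = inner_L2 (\<lambda>x. \<phi> x * trig_poly N f x) (g_sym (real j))"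
proof -
  have "inner_L2 (\<lambda>x. \<phi> x * trig_poly N f x) (g_sym (real j))
      = inner_L2 (\<lambda>x. \<Sum>k<N. f k * (\<phi> x * g_sym (real k) x)) (g_sym (real j))"
    unfolding trig_poly_def by (simp add: sum_distrib_left algebra_simps)
  also have "\<dots> = (\<Sum>k<N. fourier_coeff \<phi> (int j - int k) * f k)"
    using assms by (subst inner_L2_sum_left)
      (auto intro!: continuous_intros simp: inner_L2_mult_g_sym mult.commute)
  finally show ?thesis by (simp add: toeplitz_trunc_seq)
qed

lemma integral_norm_mult_sq_le:
  assumes "continuous_on torus \<phi>" "\<forall>x\<in>torus. cmod (\<phi> x) \<le> M" "continuous_on torus h"
  shows "integral torus (\<lambda>x. (cmod (\<phi> x * h x))\<^sup>2) \<le> M\<^sup>2 * integral torus (\<lambda>x. (cmod (h x))\<^sup>2)"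
proof -
  have "integral torus (\<lambda>x. (cmod (\<phi> x * h x))\<^sup>2) \<le> integral torus (\<lambda>x. M\<^sup>2 * (cmod (h x))\<^sup>2)"
  proof (rule integral_le)
    fix x assume "x \<in> torus"
    then have "(cmod (\<phi> x))\<^sup>2 \<le> M\<^sup>2" using assms(2) by (intro power_mono) auto
    then show "(cmod (\<phi> x * h x))\<^sup>2 \<le> M\<^sup>2 * (cmod (h x))\<^sup>2"
      unfolding norm_mult power_mult_distrib by (intro mult_right_mono) auto
  qed (use assms in \<open>auto intro!: integrable_on_torus continuous_intros\<close>)
  then show ?thesis by simp
qed

lemma L2_set_toeplitz_trunc_seq_le:
  assumes \<phi>: "continuous_on torus \<phi>" "\<forall>x\<in>torus. cmod (\<phi> x) \<le> M"
  shows "L2_set (\<lambda>j. cmod (toeplitz \<phi> (trunc_seq N f) j)) {..<J}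
    \<le> M * L2_set (\<lambda>k. cmod (f k)) {..<N}"
proof -
  define h where "h x = \<phi> x * trig_poly N f x" for x
  have "(\<Sum>j<J. (cmod (toeplitz \<phi> (trunc_seq N f) j))\<^sup>2)
      = (\<Sum>n\<in>int ` {..<J}. (cmod (inner_L2 h (g_sym (of_int n))))\<^sup>2)"
    by (subst sum.reindex) (auto simp: toeplitz_trunc_seq_eq_inner[OF \<phi>(1)] h_def[abs_def])
  also have "\<dots> \<le> integral torus (\<lambda>x. (cmod (h x))\<^sup>2)"
    unfolding h_def using \<phi>(1) by (intro bessel_inequality continuous_intros) auto
  also have "\<dots> \<le> M\<^sup>2 * (\<Sum>k<N. (cmod (f k))\<^sup>2)"
    unfolding h_def integral_norm_trig_poly_sq[symmetric]
    by (rule integral_norm_mult_sq_le[OF \<phi>]) (intro continuous_intros)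
  finally have "L2_set (\<lambda>j. cmod (toeplitz \<phi> (trunc_seq N f) j)) {..<J}
      \<le> sqrt (M\<^sup>2) * L2_set (\<lambda>k. cmod (f k)) {..<N}"
    unfolding L2_set_def real_sqrt_mult[symmetric] by (rule real_sqrt_le_mono)
  then show ?thesis using torus_bound_nonneg[OF \<phi>(2)] by simp
qed

lemma l2_toeplitz_row:
  assumes \<phi>: "continuous_on torus \<phi>" "\<forall>x\<in>torus. cmod (\<phi> x) \<le> M"
  shows "is_l2 (\<lambda>k. fourier_coeff \<phi> (int j - int k))"
    and "l2_norm (\<lambda>k. fourier_coeff \<phi> (int j - int k)) \<le> M"
proof -
  have "L2_set (\<lambda>k. cmod (fourier_coeff \<phi> (int j - int k))) {..<n} \<le> M" for n
  proof -
    have "inj_on (\<lambda>k::nat. int j - int k) {..<n}" by (auto simp: inj_on_def)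
    then have "(\<Sum>k<n. (cmod (fourier_coeff \<phi> (int j - int k)))\<^sup>2)
        = (\<Sum>m\<in>(\<lambda>k. int j - int k) ` {..<n}. (cmod (inner_L2 \<phi> (g_sym (of_int m))))\<^sup>2)"
      by (simp add: sum.reindex fourier_coeff_eq_inner)
    also have "\<dots> \<le> integral torus (\<lambda>x. (cmod (\<phi> x * 1))\<^sup>2)"
      using \<phi>(1) by simp (rule bessel_inequality, auto)
    also have "\<dots> \<le> M\<^sup>2"
      using integral_norm_mult_sq_le[OF \<phi>, of "\<lambda>_. 1"] by (simp add: integral_torus_const)
    finally show ?thesis
      unfolding L2_set_def using torus_bound_nonneg[OF \<phi>(2)] by (simp add: real_le_lsqrt)
  qed
  then show "is_l2 (\<lambda>k. fourier_coeff \<phi> (int j - int k))"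
    and "l2_norm (\<lambda>k. fourier_coeff \<phi> (int j - int k)) \<le> M"
    by (rule l2_if_L2_set_bounded)+
qed

lemma summable_toeplitz:
  assumes \<phi>: "continuous_on torus \<phi>" and f: "is_l2 f"
  shows "summable (\<lambda>k. fourier_coeff \<phi> (int j - int k) * f k)"
proof -
  obtain M where "\<forall>x\<in>torus. cmod (\<phi> x) \<le> M" using bounded_on_torus[OF \<phi>] .
  with \<phi> show ?thesis by (intro l2_Cauchy_Schwarz(1) l2_toeplitz_row(1) f)
qed

lemma toeplitz_trunc_seq_tendsto:
  "continuous_on torus \<phi> \<Longrightarrow> is_l2 f \<Longrightarrow> (\<lambda>N. toeplitz \<phi> (trunc_seq N f) j) \<longlonglongrightarrow> toeplitz \<phi> f j"
  unfolding toeplitz_trunc_seq by (unfold toeplitz_def) (intro summable_LIMSEQ summable_toeplitz)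

lemma toeplitz_norm_le:
  assumes \<phi>: "continuous_on torus \<phi>" "\<forall>x\<in>torus. cmod (\<phi> x) \<le> M" and f: "is_l2 f"
  shows "is_l2 (toeplitz \<phi> f)" and "l2_norm (toeplitz \<phi> f) \<le> M * l2_norm f"
proof -
  have "L2_set (\<lambda>j. cmod (toeplitz \<phi> f j)) {..<J} \<le> M * l2_norm f" for J
  proof (rule LIMSEQ_le_const2)
    show "(\<lambda>N. L2_set (\<lambda>j. cmod (toeplitz \<phi> (trunc_seq N f) j)) {..<J})
        \<longlonglongrightarrow> L2_set (\<lambda>j. cmod (toeplitz \<phi> f j)) {..<J}"
      unfolding L2_set_def by (intro tendsto_intros toeplitz_trunc_seq_tendsto \<phi>(1) f)
    show "\<exists>N0. \<forall>N\<ge>N0. L2_set (\<lambda>j. cmod (toeplitz \<phi> (trunc_seq N f) j)) {..<J} \<le> M * l2_norm f"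
      using L2_set_toeplitz_trunc_seq_le[OF \<phi>] L2_set_le_l2_norm[OF f] torus_bound_nonneg[OF \<phi>(2)]
      by (meson mult_left_mono order_trans)
  qed
  then show "is_l2 (toeplitz \<phi> f)" "l2_norm (toeplitz \<phi> f) \<le> M * l2_norm f"
    by (rule l2_if_L2_set_bounded)+
qed

lemma is_l2_toeplitz: "continuous_on torus \<phi> \<Longrightarrow> is_l2 f \<Longrightarrow> is_l2 (toeplitz \<phi> f)"
  by (metis bounded_on_torus toeplitz_norm_le(1))

lemma toeplitz_diff:
  "continuous_on torus \<phi> \<Longrightarrow> is_l2 f \<Longrightarrow> is_l2 g \<Longrightarrow>
    toeplitz \<phi> (\<lambda>k. f k - g k) = (\<lambda>j. toeplitz \<phi> f j - toeplitz \<phi> g j)"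
  unfolding toeplitz_def right_diff_distrib by (intro ext suminf_diff[symmetric] summable_toeplitz)

lemma toeplitz_scale:
  "continuous_on torus \<phi> \<Longrightarrow> is_l2 f \<Longrightarrow> toeplitz \<phi> (\<lambda>k. c * f k) = (\<lambda>j. c * toeplitz \<phi> f j)"
  unfolding toeplitz_def mult.left_commute[of _ c] by (intro ext suminf_mult summable_toeplitz)

lemma toeplitz_zero [simp]: "toeplitz \<phi> (\<lambda>_. 0) = (\<lambda>_. 0)"
  unfolding toeplitz_def by simp

lemma toeplitz_symbol_diff:
  assumes "continuous_on torus \<phi>" "continuous_on torus \<psi>" "is_l2 f"
  shows "toeplitz (\<lambda>x. \<phi> x - \<psi> x) f = (\<lambda>j. toeplitz \<phi> f j - toeplitz \<psi> f j)"
proof -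
  have fc: "fourier_coeff (\<lambda>x. \<phi> x - \<psi> x) n = fourier_coeff \<phi> n - fourier_coeff \<psi> n" for n
    using assms unfolding fourier_coeff_eq_inner by (intro inner_L2_diff_left continuous_intros)
  show ?thesis
    unfolding toeplitz_def fc left_diff_distrib using assms
    by (intro ext suminf_diff[symmetric] summable_toeplitz)
qed

lemma toeplitz_symbol_scale:
  assumes "continuous_on torus \<phi>" "is_l2 f"
  shows "toeplitz (\<lambda>x. c * \<phi> x) f = (\<lambda>j. c * toeplitz \<phi> f j)"
proof -
  have fc: "fourier_coeff (\<lambda>x. c * \<phi> x) n = c * fourier_coeff \<phi> n" for n
    unfolding fourier_coeff_eq_inner inner_L2_def by (simp add: mult.assoc)
  show ?thesis
    unfolding toeplitz_def fc mult.assoc using assms by (intro ext suminf_mult summable_toeplitz)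
qed

lemma toeplitz_one: "toeplitz (\<lambda>_. 1) f = f"
proof
  fix j
  have "g_sym (of_int 0) = (\<lambda>_. 1)" by (simp add: fun_eq_iff)
  then have "fourier_coeff (\<lambda>_. 1) n = (if n = 0 then 1 else 0)" for n
    using inner_L2_g_sym_int[of 0 n] unfolding fourier_coeff_eq_inner by simp
  then show "toeplitz (\<lambda>_. 1) f j = f j"
    unfolding toeplitz_def by (subst suminf_finite[of "{j}"]) auto
qed

lemma toeplitz_eq_fourier_coeff_fourier_series:
  assumes f: "summable (\<lambda>k. cmod (f k))" and \<phi>: "continuous_on torus \<phi>"
  shows "toeplitz \<phi> f j = fourier_coeff (\<lambda>x. \<phi> x * fourier_series f x) (int j)"
proof (rule LIMSEQ_unique)
  show "(\<lambda>N. toeplitz \<phi> (trunc_seq N f) j) \<longlonglongrightarrow> toeplitz \<phi> f j"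
    by (intro toeplitz_trunc_seq_tendsto \<phi> l2_if_summable_norm f)
  have "toeplitz \<phi> (trunc_seq N f) j
      = integral torus (\<lambda>x. (\<phi> x * cnj (g_sym (real j) x)) * trig_poly N f x)" for N
    unfolding toeplitz_trunc_seq_eq_inner[OF \<phi>] inner_L2_def by (simp add: ac_simps)
  moreover have "fourier_coeff (\<lambda>x. \<phi> x * fourier_series f x) (int j)
      = integral torus (\<lambda>x. (\<phi> x * cnj (g_sym (real j) x)) * fourier_series f x)"
    unfolding fourier_coeff_eq_inner inner_L2_def by (simp add: ac_simps)
  ultimately show "(\<lambda>N. toeplitz \<phi> (trunc_seq N f) j)
      \<longlonglongrightarrow> fourier_coeff (\<lambda>x. \<phi> x * fourier_series f x) (int j)"
    using \<phi> by (simp only:) (intro integral_mult_trig_poly_tendsto f continuous_intros)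
qed

lemma toeplitz_eq_if_bounded_below:
  assumes "continuous_on torus \<phi>" "toeplitz_bounded_below \<phi>"
    and f: "is_l2 f" and g: "is_l2 g" and eq: "toeplitz \<phi> f = toeplitz \<phi> g"
  shows "f = g"
proof -
  obtain c where "c > 0" and c: "\<forall>u. is_l2 u \<longrightarrow> c * l2_norm u \<le> l2_norm (toeplitz \<phi> u)"
    using assms(2) unfolding toeplitz_bounded_below_def by blast
  have d: "is_l2 (\<lambda>k. f k - g k)" by (rule l2_diff(1)[OF f g])
  have "toeplitz \<phi> (\<lambda>k. f k - g k) = (\<lambda>_. 0)" using toeplitz_diff[OF assms(1) f g] eq by simp
  then have "c * l2_norm (\<lambda>k. f k - g k) \<le> 0" using c d by auto
  then have "l2_norm (\<lambda>k. f k - g k) = 0"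
    using \<open>c > 0\<close> l2_norm_nonneg[OF d] by (simp add: mult_le_0_iff)
  then show "f = g" using l2_norm_eq_0_iff[OF d] by (simp add: fun_eq_iff)
qed

lemma toeplitz_injective_if_bounded_below:
  assumes "continuous_on torus \<phi>" "toeplitz_bounded_below \<phi>"
  shows "toeplitz_injective \<phi>"
  unfolding toeplitz_injective_def using toeplitz_eq_if_bounded_below[OF assms _ l2_zero(1)] by simp

lemma toeplitz_invertible_if_bounded_below_surjective:
  assumes \<phi>: "continuous_on torus \<phi>" and bb: "toeplitz_bounded_below \<phi>"
    and surj: "toeplitz_surjective \<phi>"
  shows "toeplitz_invertible \<phi>"
proof -
  obtain c where "c > 0" and c: "\<forall>u. is_l2 u \<longrightarrow> c * l2_norm u \<le> l2_norm (toeplitz \<phi> u)"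
    using bb unfolding toeplitz_bounded_below_def by blast
  define S where "S g = (SOME f. is_l2 f \<and> toeplitz \<phi> f = g)" for g
  have S: "is_l2 (S g) \<and> toeplitz \<phi> (S g) = g" if g: "is_l2 g" for g
  proof -
    obtain f where "is_l2 f \<and> toeplitz \<phi> f = g"
      using surj g unfolding toeplitz_surjective_def by blast
    then show ?thesis unfolding S_def by (rule someI[where P="\<lambda>f. is_l2 f \<and> toeplitz \<phi> f = g"])
  qed
  have "S (toeplitz \<phi> f) = f" if "is_l2 f" for f
    using S[OF is_l2_toeplitz[OF \<phi> that]] toeplitz_eq_if_bounded_below[OF \<phi> bb _ that] by blast
  moreover have "l2_norm (S g) \<le> 1 / c * l2_norm g" if "is_l2 g" for g
    using c[rule_format, of "S g"] S[OF that] \<open>c > 0\<close> by (simp add: field_simps)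
  ultimately show ?thesis
    unfolding toeplitz_invertible_def using S by blast
qed

section \<open>Frequencies in (-1/2, 1/2) and their integer translates\<close>

lemma norm_one_minus_cos_g_sym_le:
  assumes \<eta>: "\<bar>\<eta>\<bar> < 1/2" and x: "x \<in> torus"
  shows "cmod (1 - complex_of_real (cos (pi * \<eta>)) * g_sym \<eta> x) \<le> \<bar>sin (pi * \<eta>)\<bar>"
proof -
  define \<kappa> where "\<kappa> = cos (pi * \<eta>)"
  define \<theta> where "\<theta> = 2 * pi * \<eta> * x"
  have "\<bar>\<theta>\<bar> \<le> \<bar>pi * \<eta>\<bar>"
  proof -
    have "\<bar>\<eta>\<bar> * \<bar>x\<bar> \<le> \<bar>\<eta>\<bar> * (1/2)" using x by (intro mult_left_mono) (auto simp: mem_torus)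
    then show ?thesis unfolding \<theta>_def by (simp add: abs_mult)
  qed
  moreover have "\<bar>pi * \<eta>\<bar> \<le> pi" using \<eta> by (simp add: abs_mult)
  ultimately have "\<kappa> \<le> cos \<theta>"
    unfolding \<kappa>_def using cos_monotone_0_pi_le[of "\<bar>\<theta>\<bar>" "\<bar>pi * \<eta>\<bar>"] by simp
  then have "\<kappa> * \<kappa> \<le> \<kappa> * cos \<theta>"
    using cos_pi_mult_pos[OF \<eta>] by (intro mult_left_mono) (auto simp: \<kappa>_def)
  have "(cmod (1 - of_real \<kappa> * g_sym \<eta> x))\<^sup>2 = (1 - \<kappa> * cos \<theta>)\<^sup>2 + (\<kappa> * sin \<theta>)\<^sup>2"
    unfolding cmod_power2 g_sym_eq_cis \<theta>_def by simp
  also have "\<dots> = 1 - 2 * \<kappa> * cos \<theta> + \<kappa>\<^sup>2 * ((sin \<theta>)\<^sup>2 + (cos \<theta>)\<^sup>2)"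
    by algebra
  also have "\<dots> = 1 - 2 * \<kappa> * cos \<theta> + \<kappa>\<^sup>2" by simp
  also have "\<dots> \<le> 1 - \<kappa>\<^sup>2"
    using \<open>\<kappa> * \<kappa> \<le> \<kappa> * cos \<theta>\<close> by (simp add: power2_eq_square)
  also have "\<dots> = (sin (pi * \<eta>))\<^sup>2" by (simp add: \<kappa>_def sin_squared_eq)
  finally have "(cmod (1 - of_real \<kappa> * g_sym \<eta> x))\<^sup>2 \<le> (sin (pi * \<eta>))\<^sup>2" .
  then show ?thesis unfolding \<kappa>_def by (metis real_le_rsqrt real_sqrt_abs)
qed

lemma toeplitz_g_sym_small_frequency:
  assumes \<eta>: "\<bar>\<eta>\<bar> < 1/2"
  shows "toeplitz_bounded_below (g_sym \<eta>)" and "toeplitz_surjective (g_sym \<eta>)"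
proof -
  define \<kappa> where "\<kappa> = cos (pi * \<eta>)"
  define q where "q = \<bar>sin (pi * \<eta>)\<bar>"
  define \<psi> where "\<psi> x = 1 - complex_of_real \<kappa> * g_sym \<eta> x" for x
  have \<kappa>: "0 < \<kappa>" unfolding \<kappa>_def by (rule cos_pi_mult_pos[OF \<eta>])
  have "q\<^sup>2 < 1" using \<kappa> unfolding q_def \<kappa>_def by (simp add: sin_squared_eq)
  then have q: "0 \<le> q" "q < 1" unfolding q_def by (auto simp: abs_square_less_1)
  have \<psi>: "continuous_on torus \<psi>" "\<forall>x\<in>torus. cmod (\<psi> x) \<le> q"
    unfolding \<psi>_def q_def \<kappa>_def using norm_one_minus_cos_g_sym_le[OF \<eta>]
    by (auto intro!: continuous_intros)
  have cg: "continuous_on torus (g_sym \<eta>)" by (rule continuous_on_g_sym)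
  have T\<psi>: "toeplitz \<psi> u = (\<lambda>j. u j - of_real \<kappa> * toeplitz (g_sym \<eta>) u j)" if "is_l2 u" for u
    unfolding \<psi>_def using that
    by (simp add: toeplitz_symbol_diff toeplitz_symbol_scale toeplitz_one continuous_intros)
  show "toeplitz_bounded_below (g_sym \<eta>)"
    unfolding toeplitz_bounded_below_def
  proof (intro exI[of _ "(1 - q) / \<kappa>"] conjI allI impI)
    show "0 < (1 - q) / \<kappa>" using q \<kappa> by simp
    fix u assume u: "is_l2 u"
    have Tu: "is_l2 (toeplitz (g_sym \<eta>) u)" by (rule is_l2_toeplitz[OF cg u])
    have u_eq: "u = (\<lambda>j. toeplitz \<psi> u j + of_real \<kappa> * toeplitz (g_sym \<eta>) u j)"
      using T\<psi>[OF u] by simp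
    have "l2_norm u \<le> l2_norm (toeplitz \<psi> u) + l2_norm (\<lambda>j. of_real \<kappa> * toeplitz (g_sym \<eta>) u j)"
      by (subst (1) u_eq) (rule l2_add(2)[OF is_l2_toeplitz[OF \<psi>(1) u] l2_scale(1)[OF Tu]])
    also have "\<dots> \<le> q * l2_norm u + \<kappa> * l2_norm (toeplitz (g_sym \<eta>) u)"
      using toeplitz_norm_le(2)[OF \<psi> u] l2_scale(2)[OF Tu] \<kappa> by simp
    finally show "(1 - q) / \<kappa> * l2_norm u \<le> l2_norm (toeplitz (g_sym \<eta>) u)"
      using \<kappa> by (simp add: field_simps)
  qed
  show "toeplitz_surjective (g_sym \<eta>)"
    unfolding toeplitz_surjective_def
  proof (intro allI impI)
    fix g assume g: "is_l2 g"
    obtain h where h: "is_l2 h" "\<And>j. h j = toeplitz \<psi> h j + of_real \<kappa> * g j"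
      using l2_contraction_fixpoint[of "toeplitz \<psi>" q "\<lambda>j. of_real \<kappa> * g j"]
        is_l2_toeplitz[OF \<psi>(1)] toeplitz_diff[OF \<psi>(1)] toeplitz_norm_le(2)[OF \<psi>] q l2_scale(1)[OF g]
      by blast
    then have "toeplitz (g_sym \<eta>) h = g" using T\<psi>[OF h(1)] \<kappa> by (auto simp: fun_eq_iff)
    with h(1) show "\<exists>f. is_l2 f \<and> toeplitz (g_sym \<eta>) f = g" by blast
  qed
qed

lemma toeplitz_g_sym_invertible: "\<bar>\<eta>\<bar> < 1/2 \<Longrightarrow> toeplitz_invertible (g_sym \<eta>)"
  by (intro toeplitz_invertible_if_bounded_below_surjective toeplitz_g_sym_small_frequency
      continuous_on_g_sym)

lemma fourier_coeff_g_sym_shift: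
  "fourier_coeff (g_sym (\<xi> + of_int d)) m = fourier_coeff (g_sym \<xi>) (m - d)"
proof -
  have "g_sym (\<xi> + of_int d) x * cnj (g_sym (of_int m) x) = g_sym \<xi> x * cnj (g_sym (of_int (m - d)) x)"
    for x
    by (simp add: cnj_g_sym g_sym_add algebra_simps)
  then show ?thesis unfolding fourier_coeff_eq_inner inner_L2_def by simp
qed

lemma toeplitz_g_sym_add_nat:
  assumes w: "is_l2 w"
  shows "toeplitz (g_sym (\<xi> + real n)) w = toeplitz (g_sym \<xi>) (shift_seq n w)"
proof
  fix j
  define a where "a k = fourier_coeff (g_sym \<xi>) (int j - int k) * shift_seq n w k" for k
  have "summable a"
    unfolding a_def by (intro summable_toeplitz continuous_on_g_sym l2_shift_seq(1) w)
  then have "toeplitz (g_sym \<xi>) (shift_seq n w) j = (\<Sum>k. a (k + n)) + (\<Sum>k<n. a k)"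
    unfolding toeplitz_def a_def[symmetric] by (rule suminf_split_initial_segment)
  also have "\<dots> = (\<Sum>k. fourier_coeff (g_sym \<xi>) (int j - int k - int n) * w k)"
    by (simp add: a_def shift_seq_def algebra_simps)
  also have "\<dots> = toeplitz (g_sym (\<xi> + real n)) w j"
    unfolding toeplitz_def using fourier_coeff_g_sym_shift[of \<xi> "int n"] by simp
  finally show "toeplitz (g_sym (\<xi> + real n)) w j = toeplitz (g_sym \<xi>) (shift_seq n w) j" ..
qed

lemma toeplitz_g_sym_diff_nat: "toeplitz (g_sym (\<xi> - real p)) u j = toeplitz (g_sym \<xi>) u (j + p)"
proof -
  have "fourier_coeff (g_sym (\<xi> - real p)) (int j - int k) = fourier_coeff (g_sym \<xi>) (int (j + p) - int k)"
    for k
    using fourier_coeff_g_sym_shift[of \<xi> "- int p" "int j - int k"] by (simp add: algebra_simps)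
  then show ?thesis unfolding toeplitz_def by simp
qed

lemma toeplitz_g_sym_diff_nat_kernel:
  assumes \<eta>: "\<bar>\<eta>\<bar> < 1/2" and p: "p \<ge> 1"
  obtains f where "is_l2 f" "f \<noteq> (\<lambda>_. 0)" "toeplitz (g_sym (\<eta> - real p)) f = (\<lambda>_. 0)"
proof -
  obtain f where f: "is_l2 f" "toeplitz (g_sym \<eta>) f = (\<lambda>k. if k = 0 then 1 else 0)"
    using toeplitz_g_sym_small_frequency(2)[OF \<eta>] l2_unit_seq
    unfolding toeplitz_surjective_def by blast
  show thesis
  proof
    show "is_l2 f" by (rule f(1))
    show "f \<noteq> (\<lambda>_. 0)"
    proof
      assume "f = (\<lambda>_. 0)"
      then show False using f(2) by (auto dest: fun_cong[of _ _ 0])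
    qed
    show "toeplitz (g_sym (\<eta> - real p)) f = (\<lambda>_. 0)"
      using p by (simp add: toeplitz_g_sym_diff_nat f(2) fun_eq_iff)
  qed
qed

lemma toeplitz_g_sym_large_frequency:
  assumes \<eta>: "\<bar>\<eta>\<bar> < 1/2" and n: "n \<ge> 1"
  shows "toeplitz_bounded_below (g_sym (\<eta> + real n))"
    and "\<not> toeplitz_surjective (g_sym (\<eta> + real n))"
proof -
  note bb = toeplitz_g_sym_small_frequency(1)[OF \<eta>]
  have shift: "toeplitz (g_sym (\<eta> + real n)) w = toeplitz (g_sym \<eta>) (shift_seq n w)" if "is_l2 w" for w
    using toeplitz_g_sym_add_nat[OF that] .
  show "toeplitz_bounded_below (g_sym (\<eta> + real n))"
  proof -
    obtain c where "c > 0" and c: "\<forall>u. is_l2 u \<longrightarrow> c * l2_norm u \<le> l2_norm (toeplitz (g_sym \<eta>) u)"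
      using bb unfolding toeplitz_bounded_below_def by blast
    have "c * l2_norm w \<le> l2_norm (toeplitz (g_sym (\<eta> + real n)) w)" if "is_l2 w" for w
      using c[rule_format, OF l2_shift_seq(1)[OF that]] l2_shift_seq(2)[OF that] shift[OF that] by simp
    with \<open>c > 0\<close> show ?thesis unfolding toeplitz_bounded_below_def by blast
  qed
  show "\<not> toeplitz_surjective (g_sym (\<eta> + real n))"
  proof
    define e where "e = (\<lambda>k::nat. if k = 0 then 1 else (0::complex))"
    assume "toeplitz_surjective (g_sym (\<eta> + real n))"
    moreover have "is_l2 (toeplitz (g_sym \<eta>) e)"
      unfolding e_def by (intro is_l2_toeplitz continuous_on_g_sym l2_unit_seq)
    ultimately obtain w where w: "is_l2 w" "toeplitz (g_sym (\<eta> + real n)) w = toeplitz (g_sym \<eta>) e"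
      unfolding toeplitz_surjective_def by blast
    then have "shift_seq n w = e"
      using toeplitz_eq_if_bounded_below[OF continuous_on_g_sym bb l2_shift_seq(1)[OF w(1)]]
        shift l2_unit_seq unfolding e_def by simp
    then show False using n by (auto simp: shift_seq_def e_def fun_eq_iff dest: spec[of _ 0])
  qed
qed

lemma decompose_non_half_integer:
  fixes \<xi> :: real
  assumes "\<forall>m::int. \<xi> \<noteq> of_int m - 1/2"
  obtains \<eta> where "\<bar>\<eta>\<bar> < 1/2" and "\<xi> = \<eta> + of_int (round \<xi>)"
proof
  have "\<bar>\<xi> - of_int (round \<xi>)\<bar> \<le> 1/2" using of_int_round_abs_le[of \<xi>] by (simp add: abs_minus_commute)
  moreover have "\<bar>\<xi> - of_int (round \<xi>)\<bar> \<noteq> 1/2"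
    using assms[rule_format, of "round \<xi>"] assms[rule_format, of "round \<xi> + 1"] by (auto simp: abs_if)
  ultimately show "\<bar>\<xi> - of_int (round \<xi>)\<bar> < 1/2" by simp
qed simp

section \<open>The square root series and the frequencies -1/2 - p\<close>

lemma abs_half_gchoose_telescope:
  "(\<Sum>k<Suc m. \<bar>(1/2::real) gchoose k\<bar>) + 2 * real (Suc m) * \<bar>(1/2::real) gchoose Suc m\<bar> = 2"
proof (induction m)
  case (Suc m)
  have "real (Suc (Suc m)) * ((1/2::real) gchoose Suc (Suc m)) = (1/2 - real (Suc m)) * ((1/2) gchoose Suc m)"
    using gbinomial_mult_1[of "1/2::real" "Suc m"] by (simp add: algebra_simps)
  then have "real (Suc (Suc m)) * \<bar>(1/2::real) gchoose Suc (Suc m)\<bar>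
      = \<bar>1/2 - real (Suc m)\<bar> * \<bar>(1/2::real) gchoose Suc m\<bar>"
    by (metis abs_mult abs_of_nat)
  also have "\<bar>1/2 - real (Suc m)\<bar> = real m + 1/2" by simp
  finally show ?case using Suc by (simp add: algebra_simps)
qed simp

lemma summable_abs_half_gchoose: "summable (\<lambda>k. \<bar>(1/2::real) gchoose k\<bar>)"
proof (rule summableI_nonneg_bounded)
  show "(\<Sum>k<n. \<bar>(1/2::real) gchoose k\<bar>) \<le> 2" for n
    using abs_half_gchoose_telescope[of "n - 1"]
    by (cases n) (simp_all, smt (verit) mult_nonneg_nonneg of_nat_0_le_iff abs_ge_zero)
qed simp

lemma half_gchoose_convolution:
  "(\<Sum>i\<le>k. ((1/2::real) gchoose i) * ((1/2) gchoose (k - i))) = (if k \<le> 1 then 1 else 0)"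
proof -
  have "(\<Sum>i\<le>k. ((1/2::real) gchoose i) * ((1/2) gchoose (k - i))) = (1::real) gchoose k"
    using gbinomial_Vandermonde[of "1/2::real" "1/2" k] by (simp add: atLeast0AtMost)
  also have "\<dots> = real (1 choose k)" by (simp add: binomial_gbinomial)
  also have "\<dots> = (if k \<le> 1 then 1 else 0)" by (cases k) (auto simp: binomial_eq_0)
  finally show ?thesis .
qed

definition sqrt_one_plus_coeffs :: "nat \<Rightarrow> complex" where
  "sqrt_one_plus_coeffs k = of_real ((1/2) gchoose k)"

lemma summable_norm_sqrt_one_plus_coeffs: "summable (\<lambda>k. cmod (sqrt_one_plus_coeffs k))"
  using summable_abs_half_gchoose by (simp add: sqrt_one_plus_coeffs_def)

lemma fourier_series_sqrt_one_plus_coeffs_sq: "(fourier_series sqrt_one_plus_coeffs x)\<^sup>2 = 1 + g_sym 1 x"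
proof -
  have s: "summable (\<lambda>k. norm (sqrt_one_plus_coeffs k * g_sym (real k) x))"
    using summable_norm_sqrt_one_plus_coeffs by (simp add: norm_mult)
  have "(fourier_series sqrt_one_plus_coeffs x)\<^sup>2
      = (\<Sum>k. \<Sum>i\<le>k. sqrt_one_plus_coeffs i * g_sym (real i) x * (sqrt_one_plus_coeffs (k - i) * g_sym (real (k - i)) x))"
    unfolding fourier_series_def power2_eq_square by (rule Cauchy_product[OF s s])
  also have "\<dots> = (\<Sum>k. of_real (if k \<le> 1 then 1 else 0) * g_sym (real k) x)"
  proof (intro suminf_cong)
    fix k
    have "(\<Sum>i\<le>k. sqrt_one_plus_coeffs i * g_sym (real i) x * (sqrt_one_plus_coeffs (k - i) * g_sym (real (k - i)) x))
        = (\<Sum>i\<le>k. of_real (((1/2) gchoose i) * ((1/2) gchoose (k - i))) * g_sym (real k) x)"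
    proof (intro sum.cong refl)
      fix i assume "i \<in> {..k}"
      then have "g_sym (real i) x * g_sym (real (k - i)) x = g_sym (real k) x"
        by (simp add: g_sym_add of_nat_diff)
      then show "sqrt_one_plus_coeffs i * g_sym (real i) x * (sqrt_one_plus_coeffs (k - i) * g_sym (real (k - i)) x)
          = of_real (((1/2) gchoose i) * ((1/2) gchoose (k - i))) * g_sym (real k) x"
        by (simp add: sqrt_one_plus_coeffs_def algebra_simps)
    qed
    also have "\<dots> = of_real (\<Sum>i\<le>k. ((1/2) gchoose i) * ((1/2) gchoose (k - i))) * g_sym (real k) x"
      by (simp only: of_real_sum sum_distrib_right)
    finally show "(\<Sum>i\<le>k. sqrt_one_plus_coeffs i * g_sym (real i) x * (sqrt_one_plus_coeffs (k - i) * g_sym (real (k - i)) x))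
        = of_real (if k \<le> 1 then 1 else 0) * g_sym (real k) x"
      by (simp only: half_gchoose_convolution)
  qed
  also have "\<dots> = (\<Sum>k\<in>{0,1}. of_real (if k \<le> 1 then 1 else 0) * g_sym (real k) x)"
    by (rule suminf_finite) auto
  also have "\<dots> = 1 + g_sym 1 x" by simp
  finally show ?thesis .
qed

lemma g_sym_neg_half_mult_fourier_series_sqrt_one_plus_coeffs:
  assumes x: "x \<in> torus"
  shows "g_sym (-1/2) x * fourier_series sqrt_one_plus_coeffs x = cnj (fourier_series sqrt_one_plus_coeffs x)"
proof -
  define F where "F = fourier_series sqrt_one_plus_coeffs x"
  define z where "z = g_sym (-1/4) x * F"
  have "z\<^sup>2 = g_sym (-1/2) x * F\<^sup>2" by (simp add: z_def power2_eq_square g_sym_add algebra_simps)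
  also have "\<dots> = g_sym (-1/2) x + g_sym (1/2) x"
    unfolding F_def fourier_series_sqrt_one_plus_coeffs_sq by (simp add: algebra_simps g_sym_add)
  also have "\<dots> = of_real (2 * cos (pi * x))"
    unfolding g_sym_eq_cis by (simp add: complex_eq_iff)
  finally have z2: "z\<^sup>2 = of_real (2 * cos (pi * x))" .
  have "0 \<le> cos (pi * x)" using x by (rule cos_pi_nonneg_on_torus)
  then have "2 * Re z * Im z = 0" "(Im z)\<^sup>2 \<le> (Re z)\<^sup>2"
    using arg_cong[OF z2, of Im] arg_cong[OF z2, of Re] by (simp_all add: Re_power2 Im_power2)
  then have "Im z = 0" by (auto simp: power2_less_eq_zero_iff)
  then have "cnj z = z" by (simp add: complex_eq_iff)
  moreover have "F = g_sym (1/4) x * z" by (simp add: z_def mult.assoc[symmetric] g_sym_add)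
  ultimately show ?thesis
    unfolding F_def[symmetric] by (simp add: mult.assoc[symmetric] g_sym_add cnj_g_sym)
qed

lemma toeplitz_sqrt_one_plus_coeffs_eq_0:
  assumes p: "p \<ge> 1"
  shows "toeplitz (g_sym (-1/2 - real p)) sqrt_one_plus_coeffs = (\<lambda>_. 0)"
proof
  fix j
  define F where "F = fourier_series sqrt_one_plus_coeffs"
  have "g_sym (-1/2 - real p) x * F x * cnj (g_sym (of_int (int j)) x)
      = cnj (F x * cnj (g_sym (of_int (- int (p + j))) x))" if "x \<in> torus" for x
  proof -
    have "g_sym (-1/2 - real p) x = g_sym (-1/2) x * g_sym (- real p) x" by (simp add: g_sym_add)
    moreover have "cnj (g_sym (of_int (int j)) x) = g_sym (- real j) x" by (simp add: cnj_g_sym)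
    moreover have "g_sym (of_int (- int (p + j))) x = g_sym (- real p) x * g_sym (- real j) x"
      by (simp add: g_sym_add)
    ultimately show ?thesis
      unfolding complex_cnj_mult complex_cnj_cnj F_def
        g_sym_neg_half_mult_fourier_series_sqrt_one_plus_coeffs[OF that, symmetric]
      by (simp only: ac_simps)
  qed
  then have "toeplitz (g_sym (-1/2 - real p)) sqrt_one_plus_coeffs j = cnj (fourier_coeff F (- int (p + j)))"
    unfolding toeplitz_eq_fourier_coeff_fourier_series[OF summable_norm_sqrt_one_plus_coeffs continuous_on_g_sym]
      fourier_coeff_eq_inner inner_L2_def F_def[symmetric] integral_cnj
    by (rule integral_cong)
  also have "\<dots> = 0"
    using p unfolding F_def by (simp add: fourier_coeff_fourier_series_neg summable_norm_sqrt_one_plus_coeffs)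
  finally show "toeplitz (g_sym (-1/2 - real p)) sqrt_one_plus_coeffs j = 0" .
qed

section \<open>The frequencies -1/2 + n\<close>

lemma integral_le_amgm:
  fixes w :: "real \<Rightarrow> real"
  assumes w: "continuous_on {c..d} w" and cd: "c \<le> d" and t: "0 < t"
  shows "integral {c..d} w \<le> t / 2 * integral {c..d} (\<lambda>x. (w x)\<^sup>2) + (d - c) / (2 * t)"
proof -
  have "w x \<le> t / 2 * (w x)\<^sup>2 + 1 / (2 * t)" for x
  proof -
    have "0 \<le> (t * w x - 1)\<^sup>2" by simp
    then show ?thesis using t by (simp add: field_simps power2_eq_square)
  qed
  then have "integral {c..d} w \<le> integral {c..d} (\<lambda>x. t / 2 * (w x)\<^sup>2 + 1 / (2 * t))"
    using w by (intro integral_le integrable_continuous_interval continuous_intros) auto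
  also have "\<dots> = t / 2 * integral {c..d} (\<lambda>x. (w x)\<^sup>2) + (d - c) / (2 * t)"
    using w cd by (subst integral_add) (auto intro!: integrable_continuous_interval continuous_intros)
  finally show ?thesis .
qed

lemma integral_subinterval_le_torus:
  fixes f :: "real \<Rightarrow> real"
  assumes "{c..d} \<subseteq> torus" "continuous_on torus f" "\<And>x. x \<in> torus \<Longrightarrow> 0 \<le> f x"
  shows "integral {c..d} f \<le> integral torus f"
  using assms
  by (intro integral_subset_le integrable_on_torus integrable_continuous_interval)
    (auto intro: continuous_on_subset)

lemma integral_middle_le_cos_weighted:
  fixes w :: "real \<Rightarrow> real"
  assumes w: "continuous_on torus w" and a: "0 < a" "a < 1/2" and l: "0 < l"
  shows "integral {-a..a} w
    \<le> l / (2 * cos (pi * a)) * integral torus (\<lambda>x. cos (pi * x) * (w x)\<^sup>2) + 1 / (2 * l)"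
proof -
  define s where "s = cos (pi * a)"
  have s: "0 < s" unfolding s_def using a by (intro cos_pi_mult_pos) auto
  have sub: "{-a..a} \<subseteq> torus" using a by (auto simp: torus_def)
  have cw: "continuous_on {-a..a} w" using continuous_on_subset[OF w sub] .
  have "s * (w x)\<^sup>2 \<le> cos (pi * x) * (w x)\<^sup>2" if "x \<in> {-a..a}" for x
  proof (intro mult_right_mono)
    have "\<bar>pi * x\<bar> \<le> pi * a" using that by (auto simp: abs_mult)
    moreover have "pi * a \<le> pi" using a by simp
    ultimately show "s \<le> cos (pi * x)"
      unfolding s_def using cos_monotone_0_pi_le[of "\<bar>pi * x\<bar>" "pi * a"] by simp
  qed simp
  then have "s * integral {-a..a} (\<lambda>x. (w x)\<^sup>2) \<le> integral {-a..a} (\<lambda>x. cos (pi * x) * (w x)\<^sup>2)"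
    using cw by (subst integral_mult_right[symmetric], intro integral_le integrable_continuous_interval
        continuous_intros) auto
  also have "\<dots> \<le> integral torus (\<lambda>x. cos (pi * x) * (w x)\<^sup>2)"
    using sub w cos_pi_nonneg_on_torus by (intro integral_subinterval_le_torus continuous_intros) auto
  finally have "l / 2 * integral {-a..a} (\<lambda>x. (w x)\<^sup>2)
      \<le> l / (2 * s) * integral torus (\<lambda>x. cos (pi * x) * (w x)\<^sup>2)"
    using s l by (simp add: field_simps)
  moreover have "integral {-a..a} w \<le> l / 2 * integral {-a..a} (\<lambda>x. (w x)\<^sup>2) + (a - -a) / (2 * l)"
    using a by (intro integral_le_amgm[OF cw _ l]) simp
  moreover have "(a - -a) / (2 * l) \<le> 1 / (2 * l)" using a l by (intro divide_right_mono) auto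
  ultimately show ?thesis unfolding s_def by linarith
qed

(* Away from the endpoints the weight cos (pi x) is at least cos (pi a); on the two short end
   intervals AM-GM with a small parameter m is used instead. *)
lemma integral_le_split_estimate:
  fixes w :: "real \<Rightarrow> real"
  assumes w: "continuous_on torus w" and a: "0 < a" "a < 1/2" and l: "0 < l" and m: "0 < m"
  shows "integral torus w \<le> l / (2 * cos (pi * a)) * integral torus (\<lambda>x. cos (pi * x) * (w x)\<^sup>2)
    + 1 / (2 * l) + m * integral torus (\<lambda>x. (w x)\<^sup>2) + (1/2 - a) / m"
proof -
  define X where "X = integral torus (\<lambda>x. (w x)\<^sup>2)"
  have sub: "{-1/2..-a} \<subseteq> torus" "{a..1/2} \<subseteq> torus" "{-a..1/2} \<subseteq> torus"
    using a by (auto simp: torus_def)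
  have cw: "continuous_on S w" if "S \<subseteq> torus" for S using continuous_on_subset[OF w that] .
  have "integral {-1/2..-a} w + integral {-a..1/2} w = integral torus w"
    unfolding torus_def using a w[unfolded torus_def]
    by (intro Henstock_Kurzweil_Integration.integral_combine integrable_continuous_interval) auto
  moreover have "integral {-a..a} w + integral {a..1/2} w = integral {-a..1/2} w"
    using a cw[OF sub(3)]
    by (intro Henstock_Kurzweil_Integration.integral_combine integrable_continuous_interval) auto
  ultimately have split: "integral torus w = integral {-1/2..-a} w + integral {-a..a} w + integral {a..1/2} w"
    by linarith
  have end_interval: "integral {c..d} w \<le> m / 2 * X + (d - c) / (2 * m)"
    if "{c..d} \<subseteq> torus" "c \<le> d" for c d
  proof -
    have "integral {c..d} (\<lambda>x. (w x)\<^sup>2) \<le> X"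
      unfolding X_def using that w by (intro integral_subinterval_le_torus continuous_intros) auto
    then have "m / 2 * integral {c..d} (\<lambda>x. (w x)\<^sup>2) \<le> m / 2 * X" using m by simp
    then show ?thesis using integral_le_amgm[OF cw[OF that(1)] that(2) m] by linarith
  qed
  have "integral {-1/2..-a} w \<le> m / 2 * X + (1/2 - a) / (2 * m)"
    using end_interval[OF sub(1)] a by (simp add: field_simps)
  moreover have "integral {a..1/2} w \<le> m / 2 * X + (1/2 - a) / (2 * m)"
    using end_interval[OF sub(2)] a by simp
  moreover have "(1/2 - a) / (2 * m) + (1/2 - a) / (2 * m) = (1/2 - a) / m" by (simp add: field_simps)
  moreover have "m / 2 * X + m / 2 * X = m * X" by simp
  ultimately show ?thesis
    unfolding X_def[symmetric] using split integral_middle_le_cos_weighted[OF w a l] by linarith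
qed

lemma integral_cos_norm_trig_poly_sq_le:
  assumes u: "is_l2 u"
  shows "integral torus (\<lambda>x. cos (pi * x) * (cmod (trig_poly N u x))\<^sup>2)
    \<le> l2_norm (toeplitz (g_sym (-1/2)) (trunc_seq N u)) * l2_norm u"
proof -
  define P where "P = trig_poly N u"
  define T where "T = toeplitz (g_sym (-1/2)) (trunc_seq N u)"
  have i: "(\<lambda>x. g_sym (-1/2) x * P x * cnj (P x)) integrable_on torus"
    unfolding P_def by (intro integrable_on_torus continuous_intros)
  have "Re (inner_L2 (\<lambda>x. g_sym (-1/2) x * P x) P)
      = integral torus (\<lambda>x. Re (g_sym (-1/2) x * P x * cnj (P x)))"
    unfolding inner_L2_def using integral_linear[OF i bounded_linear_Re] unfolding o_def by (rule sym)
  also have "\<dots> = integral torus (\<lambda>x. cos (pi * x) * (cmod (P x))\<^sup>2)"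
    by (simp add: mult.assoc g_sym_eq_cis flip: complex_norm_square)
  finally have Re_eq: "integral torus (\<lambda>x. cos (pi * x) * (cmod (P x))\<^sup>2)
      = Re (inner_L2 (\<lambda>x. g_sym (-1/2) x * P x) P)" ..
  have "inner_L2 (\<lambda>x. g_sym (-1/2) x * P x) P
      = inner_L2 (\<lambda>x. g_sym (-1/2) x * P x) (\<lambda>x. \<Sum>j<N. u j * g_sym (real j) x)"
    by (simp add: P_def trig_poly_def[abs_def])
  also have "\<dots> = (\<Sum>j<N. cnj (u j) * T j)"
    unfolding T_def P_def toeplitz_trunc_seq_eq_inner[OF continuous_on_g_sym]
    by (rule inner_L2_sum_right) (auto intro!: continuous_intros)
  finally have inner_eq: "inner_L2 (\<lambda>x. g_sym (-1/2) x * P x) P = (\<Sum>j<N. cnj (u j) * T j)" .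
  have "integral torus (\<lambda>x. cos (pi * x) * (cmod (P x))\<^sup>2) \<le> cmod (\<Sum>j<N. cnj (u j) * T j)"
    unfolding Re_eq inner_eq by (rule complex_Re_le_cmod)
  also have "\<dots> \<le> (\<Sum>j<N. \<bar>cmod (T j)\<bar> * \<bar>cmod (u j)\<bar>)"
    by (rule order_trans[OF norm_sum]) (simp add: norm_mult mult.commute)
  also have "\<dots> \<le> L2_set (\<lambda>j. cmod (T j)) {..<N} * L2_set (\<lambda>j. cmod (u j)) {..<N}"
    by (rule L2_set_mult_ineq)
  also have "\<dots> \<le> l2_norm T * l2_norm u"
    unfolding T_def
    by (intro mult_mono L2_set_le_l2_norm u is_l2_toeplitz continuous_on_g_sym l2_trunc_seq(1)
        l2_norm_nonneg) simp
  finally show ?thesis unfolding P_def T_def .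
qed

lemma norm_coeff_le_toeplitz_g_sym_neg_half:
  assumes u: "is_l2 u" "l2_norm u \<le> 1" and k: "k < N"
    and a: "0 < a" "a < 1/2" and l: "0 < l" and m: "0 < m"
  shows "cmod (u k) \<le> l / (2 * cos (pi * a)) * l2_norm (toeplitz (g_sym (-1/2)) (trunc_seq N u))
    + 1 / (2 * l) + m + (1/2 - a) / m"
proof -
  define P where "P = trig_poly N u"
  have "0 < cos (pi * a)" using a by (intro cos_pi_mult_pos) auto
  moreover have "integral torus (\<lambda>x. cos (pi * x) * (cmod (P x))\<^sup>2)
      \<le> l2_norm (toeplitz (g_sym (-1/2)) (trunc_seq N u))"
    unfolding P_def using integral_cos_norm_trig_poly_sq_le[OF u(1), of N] u(2)
      l2_norm_nonneg[OF is_l2_toeplitz[OF continuous_on_g_sym l2_trunc_seq(1)]]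
    by (meson mult_left_le order_trans)
  ultimately have "l / (2 * cos (pi * a)) * integral torus (\<lambda>x. cos (pi * x) * (cmod (P x))\<^sup>2)
      \<le> l / (2 * cos (pi * a)) * l2_norm (toeplitz (g_sym (-1/2)) (trunc_seq N u))"
    using l by (intro mult_left_mono) auto
  moreover have "m * integral torus (\<lambda>x. (cmod (P x))\<^sup>2) \<le> m"
  proof -
    have "integral torus (\<lambda>x. (cmod (P x))\<^sup>2) = (L2_set (\<lambda>k. cmod (u k)) {..<N})\<^sup>2"
      unfolding P_def integral_norm_trig_poly_sq L2_set_def by (simp add: sum_nonneg)
    also have "\<dots> \<le> 1"
      using L2_set_le_l2_norm[OF u(1), of "{..<N}"] u(2) by (intro power_le_one) auto
    finally show ?thesis using m by simp
  qed
  moreover have "cmod (u k) \<le> integral torus (\<lambda>x. cmod (P x))"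
    unfolding P_def by (rule norm_le_integral_norm_trig_poly[OF k])
  moreover have "integral torus (\<lambda>x. cmod (P x))
      \<le> l / (2 * cos (pi * a)) * integral torus (\<lambda>x. cos (pi * x) * (cmod (P x))\<^sup>2)
        + 1 / (2 * l) + m * integral torus (\<lambda>x. (cmod (P x))\<^sup>2) + (1/2 - a) / m"
    unfolding P_def by (intro integral_le_split_estimate a l m continuous_intros)
  ultimately show ?thesis by linarith
qed

lemma toeplitz_g_sym_neg_half_small_coeffs:
  assumes e: "0 < \<epsilon>"
  shows "\<exists>\<delta>>0. \<forall>u k. is_l2 u \<longrightarrow> l2_norm u \<le> 1 \<longrightarrow>
    l2_norm (toeplitz (g_sym (-1/2)) u) \<le> \<delta> \<longrightarrow> cmod (u k) \<le> \<epsilon>"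
proof -
  \<comment> \<open>In norm_coeff_le_toeplitz_g_sym_neg_half take \<open>l = 2 / \<epsilon>\<close>, \<open>m = \<epsilon> / 4\<close> and
    \<open>a = 1/2 - r\<close>; with \<open>\<delta> = \<epsilon>\<^sup>2 s / 8\<close> each of its four terms is at most \<open>\<epsilon> / 4\<close>.\<close>
  define r where "r = min (1/4) (\<epsilon>\<^sup>2 / 16)"
  define s where "s = cos (pi * (1/2 - r))"
  have r: "0 < r" "r \<le> 1/4" "r \<le> \<epsilon>\<^sup>2 / 16" using e by (auto simp: r_def)
  have s: "0 < s" unfolding s_def using r by (intro cos_pi_mult_pos) auto
  have \<delta>: "0 < \<epsilon> * \<epsilon> * s / 8" using e s by simp
  have "cmod (u k) \<le> \<epsilon>" if u: "is_l2 u" "l2_norm u \<le> 1"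
    and Tu: "l2_norm (toeplitz (g_sym (-1/2)) u) \<le> \<epsilon> * \<epsilon> * s / 8" for u k
  proof -
    define T where "T = toeplitz (g_sym (-1/2))"
    have g: "continuous_on torus (g_sym (-1/2))" "\<forall>x\<in>torus. cmod (g_sym (-1/2) x) \<le> 1"
      by (auto intro: continuous_on_g_sym)
    obtain N0 where N0: "\<And>N. N \<ge> N0 \<Longrightarrow> l2_norm (\<lambda>j. u j - trunc_seq N u j) < \<epsilon> * \<epsilon> * s / 8"
      using order_tendstoD(2)[OF l2_norm_tail_tendsto_0[OF u(1)] \<delta>] by (auto simp: eventually_sequentially)
    define N where "N = max N0 (Suc k)"
    have N: "k < N" "l2_norm (\<lambda>j. u j - trunc_seq N u j) < \<epsilon> * \<epsilon> * s / 8"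
      using N0[of N] by (auto simp: N_def)
    have tail: "is_l2 (\<lambda>j. u j - trunc_seq N u j)" by (intro l2_diff u(1) l2_trunc_seq(1))
    have "T (trunc_seq N u) = (\<lambda>j. T u j - T (\<lambda>j. u j - trunc_seq N u j) j)"
      unfolding T_def using toeplitz_diff[OF g(1) u(1) tail] by (simp add: fun_eq_iff)
    then have "l2_norm (T (trunc_seq N u)) \<le> l2_norm (T u) + l2_norm (T (\<lambda>j. u j - trunc_seq N u j))"
      unfolding T_def using l2_diff(2) is_l2_toeplitz[OF g(1)] u(1) tail by metis
    also have "\<dots> \<le> \<epsilon> * \<epsilon> * s / 4"
      using Tu N(2) toeplitz_norm_le(2)[OF g tail] unfolding T_def by simp
    finally have "2 / \<epsilon> / (2 * s) * l2_norm (T (trunc_seq N u)) \<le> 2 / \<epsilon> / (2 * s) * (\<epsilon> * \<epsilon> * s / 4)"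
      using e s by (intro mult_left_mono) auto
    moreover have "2 / \<epsilon> / (2 * s) * (\<epsilon> * \<epsilon> * s / 4) = \<epsilon> / 4" using e s by simp
    moreover have "1 / (2 * (2 / \<epsilon>)) = \<epsilon> / 4" by simp
    moreover have "(1/2 - (1/2 - r)) / (\<epsilon> / 4) \<le> \<epsilon> / 4"
      using r(3) e by (simp add: field_simps power2_eq_square)
    moreover have "cmod (u k) \<le> 2 / \<epsilon> / (2 * s) * l2_norm (T (trunc_seq N u))
        + 1 / (2 * (2 / \<epsilon>)) + \<epsilon> / 4 + (1/2 - (1/2 - r)) / (\<epsilon> / 4)"
      unfolding s_def T_def using e r by (intro norm_coeff_le_toeplitz_g_sym_neg_half u N(1)) auto
    ultimately show ?thesis by linarith
  qed
  with \<delta> show ?thesis by blast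
qed

lemma toeplitz_g_sym_neg_half_kernel_trivial:
  assumes u: "is_l2 u" and T0: "toeplitz (g_sym (-1/2)) u = (\<lambda>_. 0)"
  shows "u = (\<lambda>_. 0)"
proof
  fix k
  define c where "c = l2_norm u + 1"
  have c: "0 < c" using l2_norm_nonneg[OF u] by (simp add: c_def)
  define v where "v j = complex_of_real (1 / c) * u j" for j
  have "l2_norm v = l2_norm u / c" unfolding v_def l2_scale(2)[OF u] using c by (simp add: norm_divide)
  then have "l2_norm v \<le> 1" using c by (simp add: c_def)
  moreover have "is_l2 v" unfolding v_def by (rule l2_scale(1)[OF u])
  moreover have "toeplitz (g_sym (-1/2)) v = (\<lambda>_. 0)"
    unfolding v_def toeplitz_scale[OF continuous_on_g_sym u] T0 by simp
  ultimately have v: "is_l2 v" "l2_norm v \<le> 1" "toeplitz (g_sym (-1/2)) v = (\<lambda>_. 0)" by auto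
  have "cmod (u k) \<le> 0 + e" if e: "0 < e" for e
  proof -
    have "0 < e / c" using e c by simp
    then obtain \<delta> where "0 < \<delta>" and small: "\<forall>u k. is_l2 u \<longrightarrow> l2_norm u \<le> 1 \<longrightarrow>
        l2_norm (toeplitz (g_sym (-1/2)) u) \<le> \<delta> \<longrightarrow> cmod (u k) \<le> e / c"
      using toeplitz_g_sym_neg_half_small_coeffs by blast
    have "cmod (v k) \<le> e / c" using small v \<open>0 < \<delta>\<close> by simp
    then show ?thesis using c by (simp add: v_def norm_mult norm_divide field_simps)
  qed
  then show "u k = 0" using field_le_epsilon[of "cmod (u k)" 0] by simp
qed

lemma toeplitz_g_sym_neg_half_approx_kernel:
  assumes "0 < \<epsilon>"
  obtains u where "is_l2 u" "l2_norm u = 1" "l2_norm (toeplitz (g_sym (-1/2)) u) \<le> \<epsilon>"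
proof -
  define e where "e = min (1/2) (\<epsilon> / pi)"
  have e: "0 < e" "e < 1" "pi * e \<le> \<epsilon>"
    using assms by (auto simp: e_def min_def field_simps)
  obtain f where f: "is_l2 f" "f \<noteq> (\<lambda>_. 0)" "toeplitz (g_sym (-1/2 - e)) f = (\<lambda>_. 0)"
  proof -
    have \<eta>: "\<bar>1/2 - e\<bar> < 1/2" using e(1,2) by arith
    have "1/2 - e - real 1 = -1/2 - e" by simp
    then show thesis using toeplitz_g_sym_diff_nat_kernel[OF \<eta> le_refl] that by metis
  qed
  have nf: "0 < l2_norm f" using l2_norm_eq_0_iff[OF f(1)] l2_norm_nonneg[OF f(1)] f(2) by linarith
  define u where "u j = complex_of_real (1 / l2_norm f) * f j" for j
  have "l2_norm u = 1" unfolding u_def l2_scale(2)[OF f(1)] using nf by (simp add: norm_divide)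
  moreover have "is_l2 u" unfolding u_def by (rule l2_scale(1)[OF f(1)])
  ultimately have u: "is_l2 u" "l2_norm u = 1" by auto
  have "toeplitz (g_sym (-1/2 - e)) u = (\<lambda>_. 0)"
    unfolding u_def toeplitz_scale[OF continuous_on_g_sym f(1)] f(3) by simp
  then have "l2_norm (toeplitz (g_sym (-1/2)) u)
      = l2_norm (toeplitz (\<lambda>x. g_sym (-1/2) x - g_sym (-1/2 - e) x) u)"
    using toeplitz_symbol_diff[OF continuous_on_g_sym continuous_on_g_sym u(1)] by simp
  also have "\<dots> \<le> pi * e * l2_norm u"
  proof (intro toeplitz_norm_le(2) u(1) continuous_intros ballI)
    fix x assume "x \<in> torus"
    then show "cmod (g_sym (-1/2) x - g_sym (-1/2 - e) x) \<le> pi * e"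
      using norm_g_sym_diff_le[of x "-1/2" "-1/2 - e"] e(1) by simp
  qed
  finally show ?thesis using that u e(3) by simp
qed

lemma toeplitz_g_sym_half_integer_approx_kernel:
  assumes e: "0 < \<epsilon>"
  obtains w where "is_l2 w" "1 - \<epsilon> \<le> l2_norm w"
    "l2_norm (toeplitz (g_sym (-1/2 + real n)) w) \<le> \<epsilon>"
proof -
  define e where "e = \<epsilon> / (real n + 1)"
  have "0 < e" using e by (simp add: e_def)
  then obtain \<delta> where "0 < \<delta>" and small: "\<forall>u k. is_l2 u \<longrightarrow> l2_norm u \<le> 1 \<longrightarrow>
      l2_norm (toeplitz (g_sym (-1/2)) u) \<le> \<delta> \<longrightarrow> cmod (u k) \<le> e"
    using toeplitz_g_sym_neg_half_small_coeffs by blast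
  obtain u where u: "is_l2 u" "l2_norm u = 1" "l2_norm (toeplitz (g_sym (-1/2)) u) \<le> min e \<delta>"
    using toeplitz_g_sym_neg_half_approx_kernel[of "min e \<delta>"] \<open>0 < e\<close> \<open>0 < \<delta>\<close> by auto
  define T where "T = toeplitz (g_sym (-1/2))"
  define t where "t = trunc_seq n u"
  define w where "w k = u (k + n)" for k
  have t: "is_l2 t" "l2_norm t \<le> real n * e"
  proof -
    show "is_l2 t" unfolding t_def by (rule l2_trunc_seq(1))
    have "l2_norm t \<le> (\<Sum>k<n. \<bar>cmod (u k)\<bar>)" unfolding t_def l2_trunc_seq(2) by (rule L2_set_le_sum_abs)
    also have "\<dots> \<le> real n * e"
    proof -
      have "\<forall>k. cmod (u k) \<le> e" using small u by simp
      then show ?thesis using sum_bounded_above[of "{..<n}" "\<lambda>k. \<bar>cmod (u k)\<bar>" e] by simp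
    qed
    finally show "l2_norm t \<le> real n * e" .
  qed
  have "real n * e + e = (real n + 1) * e" by (simp add: algebra_simps)
  then have ne: "real n * e + e = \<epsilon>" by (simp add: e_def)
  have w: "is_l2 w" using u(1) summable_iff_shift[of "\<lambda>k. (cmod (u k))\<^sup>2" n] by (simp add: is_l2_def w_def)
  have shift: "shift_seq n w = (\<lambda>k. u k - t k)"
    by (auto simp: fun_eq_iff shift_seq_def w_def t_def trunc_seq_def)
  have ut: "is_l2 (\<lambda>k. u k - t k)" by (rule l2_diff(1)[OF u(1) t(1)])
  show ?thesis
  proof
    show "is_l2 w" by (rule w)
    have "l2_norm u \<le> l2_norm (\<lambda>k. u k - t k) + l2_norm t" using l2_add(2)[OF ut t(1)] by simp
    then show "1 - \<epsilon> \<le> l2_norm w"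
      using u(2) t(2) ne l2_shift_seq(2)[OF w, of n] \<open>0 < e\<close> unfolding shift by linarith
    have "toeplitz (g_sym (-1/2 + real n)) w = (\<lambda>j. T u j - T t j)"
      unfolding toeplitz_g_sym_add_nat[OF w] shift T_def by (rule toeplitz_diff[OF continuous_on_g_sym u(1) t(1)])
    then have "l2_norm (toeplitz (g_sym (-1/2 + real n)) w) \<le> l2_norm (T u) + l2_norm (T t)"
      unfolding T_def by (simp add: l2_diff(2) is_l2_toeplitz u(1) t(1) continuous_on_g_sym)
    also have "\<dots> \<le> e + real n * e"
      using u(3) t(2) toeplitz_norm_le(2)[of "g_sym (-1/2)" 1, OF continuous_on_g_sym _ t(1)]
      unfolding T_def by fastforce
    finally show "l2_norm (toeplitz (g_sym (-1/2 + real n)) w) \<le> \<epsilon>" using ne by simp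
  qed
qed

lemma toeplitz_g_sym_half_integer:
  "toeplitz_injective (g_sym (-1/2 + real n))" "\<not> toeplitz_bounded_below (g_sym (-1/2 + real n))"
proof -
  show "toeplitz_injective (g_sym (-1/2 + real n))"
    unfolding toeplitz_injective_def
    using toeplitz_g_sym_add_nat toeplitz_g_sym_neg_half_kernel_trivial l2_shift_seq(1) shift_seq_eq_0_iff by metis
  show "\<not> toeplitz_bounded_below (g_sym (-1/2 + real n))"
  proof
    assume "toeplitz_bounded_below (g_sym (-1/2 + real n))"
    then obtain c where c: "0 < c"
      "\<forall>w. is_l2 w \<longrightarrow> c * l2_norm w \<le> l2_norm (toeplitz (g_sym (-1/2 + real n)) w)"
      unfolding toeplitz_bounded_below_def by blast
    define \<epsilon> where "\<epsilon> = min (1/2) (c/4)"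
    have "0 < \<epsilon>" using c by (simp add: \<epsilon>_def)
    then obtain w where w: "is_l2 w" "1 - \<epsilon> \<le> l2_norm w"
      "l2_norm (toeplitz (g_sym (-1/2 + real n)) w) \<le> \<epsilon>"
      by (rule toeplitz_g_sym_half_integer_approx_kernel)
    have "c * (1 - \<epsilon>) \<le> c * l2_norm w" using w(2) c(1) by (intro mult_left_mono) auto
    also have "\<dots> \<le> \<epsilon>" using c(2) w(1,3) by (meson order_trans)
    finally show False using c(1) by (auto simp: \<epsilon>_def min_def field_simps split: if_splits)
  qed
qed

lemma toeplitz_g_sym_not_injective:
  fixes \<xi> :: real
  assumes \<xi>: "\<xi> < -1/2"
  shows "\<not> toeplitz_injective (g_sym \<xi>)"
proof -
  have "\<exists>f. is_l2 f \<and> f \<noteq> (\<lambda>_. 0) \<and> toeplitz (g_sym \<xi>) f = (\<lambda>_. 0)"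
  proof (cases "\<exists>m::int. \<xi> = of_int m - 1/2")
    case True
    then obtain m :: int where m: "\<xi> = of_int m - 1/2" by blast
    with \<xi> have "m < 0" by simp
    then have "1 \<le> nat (- m)" "\<xi> = -1/2 - real (nat (- m))" using m by simp_all
    moreover have "sqrt_one_plus_coeffs \<noteq> (\<lambda>_. 0)" by (auto simp: sqrt_one_plus_coeffs_def fun_eq_iff intro!: exI[of _ 0])
    ultimately show ?thesis
      using toeplitz_sqrt_one_plus_coeffs_eq_0 l2_if_summable_norm[OF summable_norm_sqrt_one_plus_coeffs] by metis
  next
    case False
    then obtain \<eta> where \<eta>: "\<bar>\<eta>\<bar> < 1/2" "\<xi> = \<eta> + of_int (round \<xi>)"
      using decompose_non_half_integer[of \<xi>] by blast
    with \<xi> have "round \<xi> < 0" by linarith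
    obtain p :: nat where "1 \<le> p" "of_int (round \<xi>) = - real p"
    proof
      show "1 \<le> nat (- round \<xi>)" "of_int (round \<xi>) = - real (nat (- round \<xi>))"
        using \<open>round \<xi> < 0\<close> by simp_all
    qed
    with \<eta>(2) have "1 \<le> p" "\<xi> = \<eta> - real p" by linarith+
    then show ?thesis using toeplitz_g_sym_diff_nat_kernel[OF \<eta>(1)] by metis
  qed
  then show ?thesis unfolding toeplitz_injective_def by blast
qed

lemma toeplitz_g_sym_above_half:
  fixes \<xi> :: real
  assumes \<xi>: "1/2 < \<xi>" and not_half: "\<forall>n::nat. \<xi> \<noteq> -1/2 + real n"
  shows "toeplitz_injective (g_sym \<xi>)" and "toeplitz_bounded_below (g_sym \<xi>)"
    and "\<not> toeplitz_surjective (g_sym \<xi>)"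
proof -
  have "\<xi> \<noteq> of_int m - 1/2" for m :: int
    using not_half[rule_format, of "nat m"] \<xi> by (cases "m < 0") auto
  then obtain \<eta> where \<eta>: "\<bar>\<eta>\<bar> < 1/2" "\<xi> = \<eta> + of_int (round \<xi>)"
    using decompose_non_half_integer[of \<xi>] by blast
  with \<xi> have "0 < round \<xi>" by linarith
  obtain n :: nat where n: "1 \<le> n" and "of_int (round \<xi>) = real n"
  proof
    show "1 \<le> nat (round \<xi>)" "of_int (round \<xi>) = real (nat (round \<xi>))"
      using \<open>0 < round \<xi>\<close> by simp_all
  qed
  with \<eta>(2) have \<xi>_eq: "\<xi> = \<eta> + real n" by linarith
  show "toeplitz_bounded_below (g_sym \<xi>)" "\<not> toeplitz_surjective (g_sym \<xi>)"
    unfolding \<xi>_eq using toeplitz_g_sym_large_frequency[OF \<eta>(1) n] by simp_all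
  then show "toeplitz_injective (g_sym \<xi>)"
    by (intro toeplitz_injective_if_bounded_below continuous_on_g_sym)
qed

theorem theorem1p2:
  fixes \<xi> :: real
  shows "(\<xi> < -1/2 \<longrightarrow> \<not> toeplitz_injective (g_sym \<xi>))
   \<and> (-1/2 < \<xi> \<and> \<xi> < 1/2 \<longrightarrow> toeplitz_invertible (g_sym \<xi>))
   \<and> ((\<exists>n::nat. \<xi> = -1/2 + real n) \<longrightarrow>
        toeplitz_injective (g_sym \<xi>) \<and> \<not> toeplitz_bounded_below (g_sym \<xi>))
   \<and> (\<xi> > 1/2 \<and> (\<forall>n::nat. \<xi> \<noteq> -1/2 + real n) \<longrightarrow>
        toeplitz_injective (g_sym \<xi>) \<and> toeplitz_bounded_below (g_sym \<xi>)
        \<and> \<not> toeplitz_surjective (g_sym \<xi>))"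
  using toeplitz_g_sym_not_injective[of \<xi>] toeplitz_g_sym_invertible[of \<xi>]
    toeplitz_g_sym_half_integer toeplitz_g_sym_above_half[of \<xi>]
  by (auto simp: abs_less_iff)

end
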